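(* Let $V$ be a continuous and concave capacity on $(\Omega,\mathcal{F})$ with conjugate capacity $v$, let $\theta:\Omega\to\Omega$ be a measurable map that preserves $V$ and is ergodic with respect to $V$, and let $\xi$ be a bounded $\mathcal{F}$-measurable random variable. Then there is a constant $c$ such that $\lim_{n\to\infty}\frac1n\sum_{k=0}^{n-1}\xi(\theta^{k}\omega)=c$ quasi-surely, and $c\in\left[\int_{\Omega}\xi\, dv,\int_{\Omega}\xi\, dV\right]$.
   Context: A capacity is $V:\mathcal{F}\to[0,1]$ with $V(\emptyset)=0$, $V(\Omega)=1$, monotone. It is concave if $V(A\cup B)+V(A\cap B)\le V(A)+V(B)$ for all $A,B$, and continuous if $V(A_n)\to V(A)$ whenever $A_n\uparrow A$ or $A_n\downarrow A$. The conjugate is $v(A)=1-V(A^c)$. $\theta$ preserves $V$ if $V(\theta^{-1}A)=V(A)$ for all $A$; it is ergodic w.r.t. $V$ if for every $B$ with $\theta^{-1}B=B$: $V(B)\in\{0,1\}$, and $V(B)=0$ or $V(B^c)=0$. "Quasi-surely" means outside a set $A$ with $V(A)=0$. The Choquet integral is $\int_{\Omega}\xi\, d\mu=\int_{0}^{\infty}\mu(\{\xi\ge t\})\,dt+\int_{-\infty}^0[\mu(\{\xi\ge t\})-1]\,dt$. *)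

theory Defs
  imports "HOL-Analysis.Analysis"
begin

definition capacity :: "'a measure \<Rightarrow> ('a set \<Rightarrow> real) \<Rightarrow> bool" where
  "capacity M V \<longleftrightarrow>
     (\<forall>A\<in>sets M. 0 \<le> V A \<and> V A \<le> 1) \<and>
     V {} = 0 \<and> V (space M) = 1 \<and>
     (\<forall>A\<in>sets M. \<forall>B\<in>sets M. A \<subseteq> B \<longrightarrow> V A \<le> V B)"

definition concave_capacity :: "'a measure \<Rightarrow> ('a set \<Rightarrow> real) \<Rightarrow> bool" where
  "concave_capacity M V \<longleftrightarrow>
     (\<forall>A\<in>sets M. \<forall>B\<in>sets M. V (A \<union> B) + V (A \<inter> B) \<le> V A + V B)"

definition continuous_capacity :: "'a measure \<Rightarrow> ('a set \<Rightarrow> real) \<Rightarrow> bool" where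
  "continuous_capacity M V \<longleftrightarrow>
     (\<forall>A. range A \<subseteq> sets M \<longrightarrow> incseq A \<longrightarrow> (\<lambda>n. V (A n)) \<longlonglongrightarrow> V (\<Union>n. A n)) \<and>
     (\<forall>A. range A \<subseteq> sets M \<longrightarrow> decseq A \<longrightarrow> (\<lambda>n. V (A n)) \<longlonglongrightarrow> V (\<Inter>n. A n))"

definition conjugate_capacity :: "'a measure \<Rightarrow> ('a set \<Rightarrow> real) \<Rightarrow> 'a set \<Rightarrow> real" where
  "conjugate_capacity M V A = 1 - V (space M - A)"

definition preserves_capacity :: "'a measure \<Rightarrow> ('a set \<Rightarrow> real) \<Rightarrow> ('a \<Rightarrow> 'a) \<Rightarrow> bool" where
  "preserves_capacity M V \<theta> \<longleftrightarrow> (\<forall>A\<in>sets M. V (\<theta> -` A \<inter> space M) = V A)"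

definition ergodic_capacity :: "'a measure \<Rightarrow> ('a set \<Rightarrow> real) \<Rightarrow> ('a \<Rightarrow> 'a) \<Rightarrow> bool" where
  "ergodic_capacity M V \<theta> \<longleftrightarrow>
     (\<forall>B\<in>sets M. \<theta> -` B \<inter> space M = B \<longrightarrow>
        (V B = 0 \<or> V B = 1) \<and> (V B = 0 \<or> V (space M - B) = 0))"

definition choquet_integral :: "'a measure \<Rightarrow> ('a set \<Rightarrow> real) \<Rightarrow> ('a \<Rightarrow> real) \<Rightarrow> real" where
  "choquet_integral M \<mu> \<xi> =
     (LINT t:{0..}|lborel. \<mu> {\<omega>\<in>space M. \<xi> \<omega> \<ge> t})
   + (LINT t:{..0}|lborel. \<mu> {\<omega>\<in>space M. \<xi> \<omega> \<ge> t} - 1)"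

end

(* A concave capacity V admits no arbitrage: if a constant k lies below a nonnegative
   combination of indicators, sum l_i 1_{A_i}, then k <= sum l_i V(A_i).  Hence the cheapest
   price per time step of superhedging the Birkhoff sums S_n f by such combinations is a
   finite sublinear functional on bounded functions.  It is at most V(A) on 1_A and, since
   theta preserves V, nonpositive on coboundaries f o theta - f.  Hahn-Banach yields a linear
   functional L below it: a theta-invariant mean with L(1_A) <= V(A), so that L xi lies between
   the Choquet integrals of xi with respect to v and V.  Garsia's maximal inequality for L
   and the continuity of V give L g >= 0 whenever the Birkhoff sums of g are quasi-surely
   unbounded above.  The set where they are unbounded is invariant, hence null or conull by
   ergodicity.  Applied to g = xi - q for rational q > L xi and to g = q - xi for rational
   q < L xi, this gives S_n xi <= n q + O(1), resp. S_n xi >= n q - O(1), quasi-surely, so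
   S_n xi / n -> L xi. *)

theory Submission
  imports Defs
begin

section \<open>Bounded functions and Birkhoff sums\<close>

definition bounded_functions :: "'a set \<Rightarrow> ('a \<Rightarrow> real) set" where
  "bounded_functions S = {f. \<exists>B. \<forall>x\<in>S. \<bar>f x\<bar> \<le> B}"

lemma bounded_functionsI: "(\<And>x. x \<in> S \<Longrightarrow> \<bar>f x\<bar> \<le> B) \<Longrightarrow> f \<in> bounded_functions S"
  unfolding bounded_functions_def by blast

lemma bounded_functionsE:
  assumes "f \<in> bounded_functions S"
  obtains B where "0 \<le> B" "\<And>x. x \<in> S \<Longrightarrow> \<bar>f x\<bar> \<le> B"
proof -
  obtain B where "\<forall>x\<in>S. \<bar>f x\<bar> \<le> B" using assms unfolding bounded_functions_def by blast
  then show thesis by (intro that[of "max B 0"]) force+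
qed

lemma bounded_functions_bdd_above: "f \<in> bounded_functions S \<Longrightarrow> \<exists>B. \<forall>x\<in>S. f x \<le> B"
  by (metis bounded_functionsE abs_le_D1)

lemma bounded_functions_add:
  assumes "f \<in> bounded_functions S" "g \<in> bounded_functions S"
  shows "(\<lambda>x. f x + g x) \<in> bounded_functions S"
proof -
  obtain B C where "\<And>x. x \<in> S \<Longrightarrow> \<bar>f x\<bar> \<le> B" "\<And>x. x \<in> S \<Longrightarrow> \<bar>g x\<bar> \<le> C"
    using assms by (metis bounded_functionsE)
  then show ?thesis by (intro bounded_functionsI[of _ _ "B + C"]) (smt (verit))
qed

lemma bounded_functions_scale:
  assumes "f \<in> bounded_functions S"
  shows "(\<lambda>x. r * f x) \<in> bounded_functions S"
proof -
  obtain B where "\<And>x. x \<in> S \<Longrightarrow> \<bar>f x\<bar> \<le> B" using assms by (metis bounded_functionsE)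
  then show ?thesis
    by (intro bounded_functionsI[of _ _ "\<bar>r\<bar> * B"]) (auto simp: abs_mult intro: mult_left_mono)
qed

lemma bounded_functions_const: "(\<lambda>_. c) \<in> bounded_functions S"
  by (rule bounded_functionsI[of _ _ "\<bar>c\<bar>"]) simp

lemma bounded_functions_indicator: "indicator A \<in> bounded_functions S"
  by (rule bounded_functionsI[of _ _ 1]) (simp add: indicator_def)

lemma bounded_functions_diff:
  "f \<in> bounded_functions S \<Longrightarrow> g \<in> bounded_functions S \<Longrightarrow> (\<lambda>x. f x - g x) \<in> bounded_functions S"
  using bounded_functions_add[of f S "\<lambda>x. (-1) * g x"] bounded_functions_scale[of g S "-1"] by simp

lemma bounded_functions_sum:
  fixes m :: nat
  shows "(\<And>j. j < m \<Longrightarrow> F j \<in> bounded_functions S) \<Longrightarrow> (\<lambda>x. \<Sum>j<m. F j x) \<in> bounded_functions S"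
  by (induction m) (auto intro: bounded_functions_add bounded_functions_const[of 0, simplified])

lemma bounded_functions_mult_indicator:
  "f \<in> bounded_functions S \<Longrightarrow> (\<lambda>x. f x * indicator A x) \<in> bounded_functions S"
  by (erule bounded_functionsE, rule bounded_functionsI) (auto simp: indicator_def)

lemma bounded_functions_compose:
  "f \<in> bounded_functions S \<Longrightarrow> g ` T \<subseteq> S \<Longrightarrow> (\<lambda>x. f (g x)) \<in> bounded_functions T"
  by (erule bounded_functionsE, rule bounded_functionsI) auto

definition birkhoff_sum :: "('a \<Rightarrow> 'a) \<Rightarrow> nat \<Rightarrow> ('a \<Rightarrow> real) \<Rightarrow> 'a \<Rightarrow> real" where
  "birkhoff_sum T n f x = (\<Sum>k<n. f ((T ^^ k) x))"

lemma birkhoff_sum_0 [simp]: "birkhoff_sum T 0 f x = 0"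
  by (simp add: birkhoff_sum_def)

lemma birkhoff_sum_1 [simp]: "birkhoff_sum T 1 f x = f x" "birkhoff_sum T (Suc 0) f x = f x"
  by (simp_all add: birkhoff_sum_def)

lemma birkhoff_sum_Suc: "birkhoff_sum T (Suc n) f x = f x + birkhoff_sum T n f (T x)"
  unfolding birkhoff_sum_def by (simp only: sum.lessThan_Suc_shift funpow_Suc_right comp_def funpow_0)

lemma birkhoff_sum_add:
  "birkhoff_sum T (m + n) f x = birkhoff_sum T m f x + birkhoff_sum T n f ((T ^^ m) x)"
  unfolding birkhoff_sum_def
  by (induction n) (simp_all add: funpow_add[of _ m, unfolded comp_def] add.commute)

lemma birkhoff_sum_mult:
  "birkhoff_sum T (n * m) f x = (\<Sum>j<m. birkhoff_sum T n f ((T ^^ (j * n)) x))"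
proof (induction m)
  case (Suc m)
  have "birkhoff_sum T (n * Suc m) f x = birkhoff_sum T (n * m + n) f x" by (simp add: algebra_simps)
  then show ?case using Suc by (simp add: birkhoff_sum_add mult.commute)
qed simp

lemma birkhoff_sum_plus:
  "birkhoff_sum T n (\<lambda>x. f x + g x) x = birkhoff_sum T n f x + birkhoff_sum T n g x"
  unfolding birkhoff_sum_def by (simp add: sum.distrib)

lemma birkhoff_sum_scale: "birkhoff_sum T n (\<lambda>x. r * f x) x = r * birkhoff_sum T n f x"
  unfolding birkhoff_sum_def by (simp add: sum_distrib_left)

lemma birkhoff_sum_diff_const:
  "birkhoff_sum T n (\<lambda>x. f x - c) x = birkhoff_sum T n f x - real n * c"
  "birkhoff_sum T n (\<lambda>x. c - f x) x = real n * c - birkhoff_sum T n f x"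
  unfolding birkhoff_sum_def by (simp_all add: sum_subtractf)

lemma birkhoff_sum_coboundary: "birkhoff_sum T n (\<lambda>x. f (T x) - f x) x = f ((T ^^ n) x) - f x"
  unfolding birkhoff_sum_def
  using sum_lessThan_telescope[of "\<lambda>k. f ((T ^^ k) x)" n] by simp

definition birkhoff_max :: "('a \<Rightarrow> 'a) \<Rightarrow> nat \<Rightarrow> ('a \<Rightarrow> real) \<Rightarrow> 'a \<Rightarrow> real" where
  "birkhoff_max T n f x = Max ((\<lambda>k. birkhoff_sum T k f x) ` {..n})"

lemma birkhoff_max_ge: "k \<le> n \<Longrightarrow> birkhoff_sum T k f x \<le> birkhoff_max T n f x"
  unfolding birkhoff_max_def by (intro Max_ge) auto

lemma birkhoff_max_attained: "\<exists>k\<le>n. birkhoff_max T n f x = birkhoff_sum T k f x"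
proof -
  have "birkhoff_max T n f x \<in> (\<lambda>k. birkhoff_sum T k f x) ` {..n}"
    unfolding birkhoff_max_def by (rule Max_in) auto
  then show ?thesis by auto
qed

lemma birkhoff_max_diff_le:
  "birkhoff_max T n f x - birkhoff_max T n f (T x) \<le> f x * indicator {x. \<exists>k\<le>n. 0 < birkhoff_sum T k f x} x"
proof -
  obtain k where k: "k \<le> n" "birkhoff_max T n f x = birkhoff_sum T k f x"
    using birkhoff_max_attained[of n T f x] by blast
  have nonneg: "0 \<le> birkhoff_max T n f (T x)" using birkhoff_max_ge[of 0 n T f "T x"] by simp
  show ?thesis
  proof (cases "\<exists>k\<le>n. 0 < birkhoff_sum T k f x")
    case True
    then obtain k' where "k' \<le> n" "0 < birkhoff_sum T k' f x" by blast
    then have "0 < birkhoff_sum T k f x" using birkhoff_max_ge[of k' n T f x] k(2) by linarith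
    then obtain j where j: "k = Suc j" using gr0_implies_Suc[of k] by fastforce
    have "birkhoff_max T n f x = f x + birkhoff_sum T j f (T x)" using k(2) unfolding j birkhoff_sum_Suc .
    moreover have "birkhoff_sum T j f (T x) \<le> birkhoff_max T n f (T x)"
      using j k(1) by (intro birkhoff_max_ge) simp
    moreover have "indicator {x. \<exists>k\<le>n. 0 < birkhoff_sum T k f x} x = (1::real)" using True by simp
    ultimately show ?thesis by simp
  next
    case False
    then have "birkhoff_max T n f x \<le> 0" using k by (simp add: not_less)
    moreover have "indicator {x. \<exists>k\<le>n. 0 < birkhoff_sum T k f x} x = (0::real)" using False by simp
    ultimately show ?thesis using nonneg by simp
  qed
qed

section \<open>Hahn--Banach for spaces of real functions\<close>

locale sublinear_functional =
  fixes S :: "('a \<Rightarrow> real) set" and p :: "('a \<Rightarrow> real) \<Rightarrow> real"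
  assumes zero_in: "(\<lambda>_. 0) \<in> S"
    and add_in: "f \<in> S \<Longrightarrow> g \<in> S \<Longrightarrow> (\<lambda>x. f x + g x) \<in> S"
    and scale_in: "f \<in> S \<Longrightarrow> (\<lambda>x. r * f x) \<in> S"
    and subadditive: "f \<in> S \<Longrightarrow> g \<in> S \<Longrightarrow> p (\<lambda>x. f x + g x) \<le> p f + p g"
    and positively_homogeneous: "f \<in> S \<Longrightarrow> 0 < r \<Longrightarrow> p (\<lambda>x. r * f x) = r * p f"
begin

lemma p_zero: "p (\<lambda>_. 0) = 0"
  using positively_homogeneous[OF zero_in, of 2] by simp

lemma diff_in: "f \<in> S \<Longrightarrow> g \<in> S \<Longrightarrow> (\<lambda>x. f x - g x) \<in> S"
  using add_in[of f "\<lambda>x. (-1) * g x"] scale_in[of g "-1"] by simp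

text \<open>Partial linear functionals below \<open>p\<close> are handled through their graphs, so that Zorn's lemma
  applies to the inclusion order.\<close>

definition dominated_linear_graph :: "(('a \<Rightarrow> real) \<times> real) set \<Rightarrow> bool" where
  "dominated_linear_graph G \<longleftrightarrow> G \<subseteq> S \<times> UNIV \<and> ((\<lambda>_. 0), 0) \<in> G
     \<and> (\<forall>f a g b. (f, a) \<in> G \<longrightarrow> (g, b) \<in> G \<longrightarrow> ((\<lambda>x. f x + g x), a + b) \<in> G)
     \<and> (\<forall>f a r. (f, a) \<in> G \<longrightarrow> ((\<lambda>x. r * f x), r * a) \<in> G)
     \<and> (\<forall>f a. (f, a) \<in> G \<longrightarrow> a \<le> p f)"

lemma dominated_linear_graphD:
  assumes "dominated_linear_graph G"
  shows "(g, a) \<in> G \<Longrightarrow> g \<in> S" "((\<lambda>_. 0), 0) \<in> G"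
    "(g, a) \<in> G \<Longrightarrow> (h, b) \<in> G \<Longrightarrow> ((\<lambda>x. g x + h x), a + b) \<in> G"
    "(g, a) \<in> G \<Longrightarrow> ((\<lambda>x. r * g x), r * a) \<in> G" "(g, a) \<in> G \<Longrightarrow> a \<le> p g"
  using assms unfolding dominated_linear_graph_def by blast+

lemma dominated_linear_graph_unique:
  assumes G: "dominated_linear_graph G" and "(f, a) \<in> G" "(f, b) \<in> G"
  shows "a = b"
proof -
  have "a \<le> b" if "(f, a) \<in> G" "(f, b) \<in> G" for a b
  proof -
    have "a + (-1) * b \<le> p (\<lambda>x. f x + (-1) * f x)"
      using that by (intro dominated_linear_graphD[OF G]) 
    then show ?thesis using p_zero by simp
  qed
  then show ?thesis using assms by (meson order.antisym)
qed

lemma dominated_linear_graph_Union: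
  assumes "C \<in> chains (Collect dominated_linear_graph)" "C \<noteq> {}"
  shows "dominated_linear_graph (\<Union>C)"
proof -
  have good: "\<And>X. X \<in> C \<Longrightarrow> dominated_linear_graph X" using chainsD2[OF assms(1)] by auto
  have common: "\<exists>Z\<in>C. (f, a) \<in> Z \<and> (g, b) \<in> Z" if "(f, a) \<in> \<Union>C" "(g, b) \<in> \<Union>C" for f a g b
    using that chainsD[OF assms(1)] by blast
  show ?thesis unfolding dominated_linear_graph_def
  proof (intro conjI allI impI)
    show "\<Union>C \<subseteq> S \<times> UNIV" using good unfolding dominated_linear_graph_def by blast
    show "((\<lambda>_. 0), 0) \<in> \<Union>C" using good assms(2) dominated_linear_graphD(2) by blast
  next
    fix f a g b assume "(f, a) \<in> \<Union>C" "(g, b) \<in> \<Union>C"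
    then obtain Z where "Z \<in> C" "(f, a) \<in> Z" "(g, b) \<in> Z" using common by blast
    then show "((\<lambda>x. f x + g x), a + b) \<in> \<Union>C" using good dominated_linear_graphD(3) by blast
  next
    fix f a r assume "(f, a) \<in> \<Union>C"
    then show "((\<lambda>x. r * f x), r * a) \<in> \<Union>C" using good dominated_linear_graphD(4) by blast
  next
    fix f a assume "(f, a) \<in> \<Union>C"
    then show "a \<le> p f" using good dominated_linear_graphD(5) by blast
  qed
qed

text \<open>The classical one-step extension: the value \<open>\<alpha>\<close> at the new direction \<open>f\<close> is squeezed
  between \<open>a - p (g - f)\<close> and \<open>p (h + f) - b\<close> for all \<open>(g, a), (h, b)\<close> in the graph.\<close>

lemma dominated_linear_graph_squeeze:
  assumes G: "dominated_linear_graph G" and f: "f \<in> S"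
  obtains \<alpha> where "\<And>g a. (g, a) \<in> G \<Longrightarrow> a - p (\<lambda>x. g x - f x) \<le> \<alpha>"
    "\<And>h b. (h, b) \<in> G \<Longrightarrow> \<alpha> \<le> p (\<lambda>x. h x + f x) - b"
proof -
  note GS = dominated_linear_graphD(1)[OF G] and G0 = dominated_linear_graphD(2)[OF G]
  have squeeze: "a - p (\<lambda>x. g x - f x) \<le> p (\<lambda>x. h x + f x) - b" if "(g, a) \<in> G" "(h, b) \<in> G" for g a h b
  proof -
    have "a + b \<le> p (\<lambda>x. (g x - f x) + (h x + f x))"
      using dominated_linear_graphD(5)[OF G dominated_linear_graphD(3)[OF G that]] by simp
    also have "\<dots> \<le> p (\<lambda>x. g x - f x) + p (\<lambda>x. h x + f x)"
      using subadditive[OF diff_in[OF GS[OF that(1)] f] add_in[OF GS[OF that(2)] f]] .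
    finally show ?thesis by simp
  qed
  define lower where "lower = {a - p (\<lambda>x. g x - f x) | g a. (g, a) \<in> G}"
  have bdd: "bdd_above lower" unfolding lower_def bdd_above_def using squeeze[OF _ G0] by blast
  show thesis
  proof (rule that[of "Sup lower"])
    show "a - p (\<lambda>x. g x - f x) \<le> Sup lower" if "(g, a) \<in> G" for g a
      using bdd that unfolding lower_def by (intro cSup_upper) blast+
    show "Sup lower \<le> p (\<lambda>x. h x + f x) - b" if "(h, b) \<in> G" for h b
    proof (rule cSup_least)
      show "lower \<noteq> {}" unfolding lower_def using G0 by blast
    qed (use squeeze[OF _ that] in \<open>auto simp: lower_def\<close>)
  qed
qed

lemma dominated_linear_graph_extension_value:
  assumes G: "dominated_linear_graph G" and f: "f \<in> S"
  obtains \<alpha> where "\<And>g a t. (g, a) \<in> G \<Longrightarrow> a + t * \<alpha> \<le> p (\<lambda>x. g x + t * f x)"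
proof -
  obtain \<alpha> where ge: "\<And>g a. (g, a) \<in> G \<Longrightarrow> a - p (\<lambda>x. g x - f x) \<le> \<alpha>"
    and le: "\<And>h b. (h, b) \<in> G \<Longrightarrow> \<alpha> \<le> p (\<lambda>x. h x + f x) - b"
    using dominated_linear_graph_squeeze[OF G f] by blast
  note Gscale = dominated_linear_graphD(4)[OF G]
  show thesis
  proof (rule that[of \<alpha>])
    fix g a t assume ga: "(g, a) \<in> G"
    have g: "g \<in> S" using dominated_linear_graphD(1)[OF G ga] .
    show "a + t * \<alpha> \<le> p (\<lambda>x. g x + t * f x)"
    proof (cases t "0::real" rule: linorder_cases)
      case greater
      have "t * \<alpha> \<le> t * (p (\<lambda>x. (1 / t) * g x + f x) - (1 / t) * a)"
        using mult_left_mono[OF le[OF Gscale[OF ga, of "1 / t"]], of t] greater by simp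
      also have "\<dots> = p (\<lambda>x. t * ((1 / t) * g x + f x)) - a"
        using positively_homogeneous[OF add_in[OF scale_in[OF g, of "1 / t"] f] greater] greater
        by (simp add: right_diff_distrib)
      also have "(\<lambda>x. t * ((1 / t) * g x + f x)) = (\<lambda>x. g x + t * f x)"
        using greater by (simp add: distrib_left)
      finally show ?thesis by simp
    next
      case less
      have "- t * ((1 / - t) * a - p (\<lambda>x. (1 / - t) * g x - f x)) \<le> - t * \<alpha>"
        using ge[OF Gscale[OF ga, of "1 / - t"]] less by (intro mult_left_mono) simp_all
      moreover have "- t * ((1 / - t) * a - p (\<lambda>x. (1 / - t) * g x - f x))
          = a - p (\<lambda>x. - t * ((1 / - t) * g x - f x))"
        using positively_homogeneous[OF diff_in[OF scale_in[OF g, of "1 / - t"] f], of "- t"] less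
        by (simp add: right_diff_distrib)
      moreover have "(\<lambda>x. - t * ((1 / - t) * g x - f x)) = (\<lambda>x. g x + t * f x)"
        using less by (simp add: right_diff_distrib)
      ultimately show ?thesis by simp
    next
      case equal
      then show ?thesis using dominated_linear_graphD(5)[OF G ga] by simp
    qed
  qed
qed

lemma dominated_linear_graph_extend:
  assumes G: "dominated_linear_graph G" and f: "f \<in> S"
  obtains G' where "dominated_linear_graph G'" "G \<subseteq> G'" "\<exists>a. (f, a) \<in> G'"
proof -
  obtain \<alpha> where bound: "\<And>g a t. (g, a) \<in> G \<Longrightarrow> a + t * \<alpha> \<le> p (\<lambda>x. g x + t * f x)"
    using dominated_linear_graph_extension_value[OF assms] by blast
  define G' where "G' = {((\<lambda>x. g x + t * f x), a + t * \<alpha>) | g a t. (g, a) \<in> G}"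
  have G'I: "((\<lambda>x. g x + t * f x), a + t * \<alpha>) \<in> G'" if "(g, a) \<in> G" for g a t
    unfolding G'_def using that by blast
  note GS = dominated_linear_graphD(1)[OF G] and G0 = dominated_linear_graphD(2)[OF G]
    and Gadd = dominated_linear_graphD(3)[OF G] and Gscale = dominated_linear_graphD(4)[OF G]
  have "dominated_linear_graph G'" unfolding dominated_linear_graph_def
  proof (intro conjI allI impI)
    show "G' \<subseteq> S \<times> UNIV" unfolding G'_def using f by (auto intro: add_in scale_in dest: GS)
    show "((\<lambda>_. 0), 0) \<in> G'" using G'I[OF G0, of 0] by simp
  next
    fix h1 a1 h2 a2 assume "(h1, a1) \<in> G'" "(h2, a2) \<in> G'"
    then obtain g1 b1 t1 g2 b2 t2 where "(g1, b1) \<in> G" "(g2, b2) \<in> G"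
      and "h1 = (\<lambda>x. g1 x + t1 * f x)" "a1 = b1 + t1 * \<alpha>" "h2 = (\<lambda>x. g2 x + t2 * f x)" "a2 = b2 + t2 * \<alpha>"
      unfolding G'_def by blast
    then show "((\<lambda>x. h1 x + h2 x), a1 + a2) \<in> G'"
      using G'I[OF Gadd, of g1 b1 g2 b2 "t1 + t2"] by (simp add: algebra_simps)
  next
    fix h a r assume "(h, a) \<in> G'"
    then obtain g b t where "(g, b) \<in> G" "h = (\<lambda>x. g x + t * f x)" "a = b + t * \<alpha>"
      unfolding G'_def by blast
    then show "((\<lambda>x. r * h x), r * a) \<in> G'"
      using G'I[OF Gscale, of g b r "r * t"] by (simp add: algebra_simps)
  next
    fix h a assume "(h, a) \<in> G'"
    then show "a \<le> p h" unfolding G'_def using bound by blast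
  qed
  moreover have "G \<subseteq> G'" using G'I[of _ _ 0] by force
  moreover have "(f, \<alpha>) \<in> G'" using G'I[OF G0, of 1] by simp
  ultimately show thesis using that by blast
qed

lemma ex_total_dominated_linear_graph:
  obtains G where "dominated_linear_graph G" "\<And>f. f \<in> S \<Longrightarrow> \<exists>a. (f, a) \<in> G"
proof -
  have "\<exists>U\<in>Collect dominated_linear_graph. \<forall>X\<in>C. X \<subseteq> U"
    if "C \<in> chains (Collect dominated_linear_graph)" for C
  proof (cases "C = {}")
    case True
    have "dominated_linear_graph {((\<lambda>_. 0), 0)}"
      unfolding dominated_linear_graph_def using zero_in p_zero by auto
    then show ?thesis using True by blast
  next
    case False
    then show ?thesis using dominated_linear_graph_Union[OF that False] by blast
  qed
  then obtain G where G: "dominated_linear_graph G"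
    and maximal: "\<And>X. dominated_linear_graph X \<Longrightarrow> G \<subseteq> X \<Longrightarrow> X = G"
    using Zorn_Lemma2[of "Collect dominated_linear_graph"] by auto
  show thesis
  proof (rule that[OF G])
    fix f assume f: "f \<in> S"
    obtain G' where "dominated_linear_graph G'" "G \<subseteq> G'" "\<exists>a. (f, a) \<in> G'"
      using dominated_linear_graph_extend[OF G f] .
    then show "\<exists>a. (f, a) \<in> G" using maximal by blast
  qed
qed

theorem hahn_banach:
  obtains L where "\<And>f g. f \<in> S \<Longrightarrow> g \<in> S \<Longrightarrow> L (\<lambda>x. f x + g x) = L f + L g"
    "\<And>f r. f \<in> S \<Longrightarrow> L (\<lambda>x. r * f x) = r * L f" "\<And>f. f \<in> S \<Longrightarrow> L f \<le> p f"
proof -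
  obtain G where G: "dominated_linear_graph G" and total: "\<And>f. f \<in> S \<Longrightarrow> \<exists>a. (f, a) \<in> G"
    using ex_total_dominated_linear_graph by blast
  define L where "L f = (THE a. (f, a) \<in> G)" for f
  have LG: "(f, L f) \<in> G" if f: "f \<in> S" for f
  proof -
    obtain a where a: "(f, a) \<in> G" using total[OF f] ..
    then have "L f = a" unfolding L_def using dominated_linear_graph_unique[OF G] by blast
    then show ?thesis using a by simp
  qed
  show thesis
  proof (rule that)
    fix f g assume f: "f \<in> S" and g: "g \<in> S"
    have "((\<lambda>x. f x + g x), L f + L g) \<in> G" using G LG[OF f] LG[OF g] by (rule dominated_linear_graphD(3))
    then show "L (\<lambda>x. f x + g x) = L f + L g"
      by (rule dominated_linear_graph_unique[OF G LG[OF add_in[OF f g]]])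
  next
    fix f r assume f: "f \<in> S"
    have "((\<lambda>x. r * f x), r * L f) \<in> G" using G LG[OF f] by (rule dominated_linear_graphD(4))
    then show "L (\<lambda>x. r * f x) = r * L f"
      by (rule dominated_linear_graph_unique[OF G LG[OF scale_in[OF f]]])
  next
    fix f assume "f \<in> S"
    then show "L f \<le> p f" by (intro dominated_linear_graphD(5)[OF G] LG)
  qed
qed

end

section \<open>Choquet integrals as integrals of antitone functions\<close>

lemma antitone_unit_integrable:
  fixes g :: "real \<Rightarrow> real"
  assumes anti: "antimono g" and g01: "\<And>t. 0 \<le> g t" "\<And>t. g t \<le> 1"
  shows "set_integrable lborel {x..y} g" "g integrable_on {x..y}"
    "(LINT t:{x..y}|lborel. g t) = integral {x..y} g"
proof -
  have "(\<lambda>t. - g t) \<in> borel_measurable borel"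
    using anti by (intro borel_measurable_mono) (simp add: antimono_def mono_def)
  then have "g \<in> borel_measurable borel" using borel_measurable_uminus by fastforce
  show si: "set_integrable lborel {x..y} g"
  proof (rule set_integrable_bound[OF borel_integrable_atLeastAtMost'[of x y "\<lambda>_. 1"]])
    show "set_borel_measurable lborel {x..y} g"
      unfolding set_borel_measurable_def using \<open>g \<in> borel_measurable borel\<close> by measurable
    show "AE t in lborel. t \<in> {x..y} \<longrightarrow> norm (g t) \<le> norm (1::real)"
      using g01 by auto
  qed simp
  show "g integrable_on {x..y}" "(LINT t:{x..y}|lborel. g t) = integral {x..y} g"
    using set_borel_integral_eq_integral[OF si] by auto
qed

lemma antitone_integral_bounds:
  fixes g :: "real \<Rightarrow> real"
  assumes anti: "antimono g" and g01: "\<And>t. 0 \<le> g t" "\<And>t. g t \<le> 1" and "x \<le> y"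
  shows "(y - x) * g y \<le> integral {x..y} g" "integral {x..y} g \<le> (y - x) * g x"
proof -
  have gi: "g integrable_on {x..y}" using antitone_unit_integrable[OF anti g01] by blast
  have "integral {x..y} (\<lambda>_. g y) \<le> integral {x..y} g"
    using anti gi by (intro integral_le) (auto simp: antimono_def)
  then show "(y - x) * g y \<le> integral {x..y} g" using \<open>x \<le> y\<close> by (simp add: content_real)
  have "integral {x..y} g \<le> integral {x..y} (\<lambda>_. g x)"
    using anti gi by (intro integral_le) (auto simp: antimono_def)
  then show "integral {x..y} g \<le> (y - x) * g x" using \<open>x \<le> y\<close> by (simp add: content_real)
qed

lemma antitone_riemann_sums:
  fixes g :: "real \<Rightarrow> real"
  assumes anti: "antimono g" and g01: "\<And>t. 0 \<le> g t" "\<And>t. g t \<le> 1" and d: "0 < d"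
  shows "d * (\<Sum>j<m. g (a + real j * d)) \<le> integral {a..a + real m * d} g + d"
    and "integral {a..a + real m * d} g \<le> d * (\<Sum>j<m. g (a + (real j + 1) * d)) + d"
proof -
  have exact: "d * (\<Sum>j<m. g (a + (real j + 1) * d)) \<le> integral {a..a + real m * d} g
      \<and> integral {a..a + real m * d} g \<le> d * (\<Sum>j<m. g (a + real j * d))"
  proof (induction m)
    case (Suc m)
    let ?x = "a + real m * d" and ?y = "a + real (Suc m) * d"
    have "integral {a..?x} g + integral {?x..?y} g = integral {a..?y} g"
      using d antitone_unit_integrable(2)[OF anti g01]
      by (intro Henstock_Kurzweil_Integration.integral_combine) auto
    moreover have "?y - ?x = d" "?y = a + (real m + 1) * d" by (simp_all add: algebra_simps)
    ultimately show ?case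
      using Suc.IH antitone_integral_bounds[OF anti g01, of ?x ?y] d by (simp add: algebra_simps)
  qed simp
  have "(\<Sum>j<m. g (a + real (Suc j) * d) - g (a + real j * d)) = g (a + real m * d) - g (a + real 0 * d)"
    by (rule sum_lessThan_telescope)
  then have shift: "(\<Sum>j<m. g (a + real j * d)) = (\<Sum>j<m. g (a + (real j + 1) * d)) + (g a - g (a + real m * d))"
    by (simp add: sum_subtractf algebra_simps)
  have "d * (g a - g (a + real m * d)) \<le> d" "0 \<le> d * (g a - g (a + real m * d))"
    using g01[of a] g01[of "a + real m * d"] anti d by (auto simp: antimono_def)
  then show "d * (\<Sum>j<m. g (a + real j * d)) \<le> integral {a..a + real m * d} g + d"
    and "integral {a..a + real m * d} g \<le> d * (\<Sum>j<m. g (a + (real j + 1) * d)) + d"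
    using exact unfolding shift distrib_left by linarith+
qed

lemma choquet_formula_antitone:
  fixes g :: "real \<Rightarrow> real"
  assumes anti: "antimono g" and g01: "\<And>t. 0 \<le> g t" "\<And>t. g t \<le> 1"
    and "a \<le> 0" "0 \<le> b" and below: "\<And>t. t \<le> a \<Longrightarrow> g t = 1" and above: "\<And>t. b \<le> t \<Longrightarrow> g t = 0"
  shows "(LINT t:{0..}|lborel. g t) + (LINT t:{..0}|lborel. g t - 1) = a + integral {a..b} g"
proof -
  note integrable = antitone_unit_integrable[OF anti g01]
  have "(LINT t:{0..}|lborel. g t) = (LINT t:{0..b}|lborel. g t)"
    unfolding set_lebesgue_integral_def
    by (rule arg_cong[where f = "integral\<^sup>L lborel"]) (auto simp: indicator_def fun_eq_iff above)
  also have "\<dots> = integral {0..b} g" using integrable by blast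
  finally have pos: "(LINT t:{0..}|lborel. g t) = integral {0..b} g" .
  have "(LINT t:{..0}|lborel. g t - 1) = (LINT t:{a..0}|lborel. g t - 1)"
    unfolding set_lebesgue_integral_def
    by (rule arg_cong[where f = "integral\<^sup>L lborel"]) (auto simp: indicator_def fun_eq_iff below)
  also have "\<dots> = (LINT t:{a..0}|lborel. g t) - (LINT t:{a..0}|lborel. 1)"
    using set_integral_diff(2)[OF integrable(1) borel_integrable_atLeastAtMost'[of a 0 "\<lambda>_. 1"]] by simp
  also have "(LINT t:{a..0}|lborel. (1::real)) = integral {a..0} (\<lambda>_. 1::real)"
    by (rule set_borel_integral_eq_integral(2)[OF borel_integrable_atLeastAtMost']) simp
  also have "\<dots> = - a" using \<open>a \<le> 0\<close> by (simp add: content_real)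
  finally have neg: "(LINT t:{..0}|lborel. g t - 1) = integral {a..0} g + a"
    by (simp only: integrable(3))
  have "integral {a..0} g + integral {0..b} g = integral {a..b} g"
    using assms(4,5) integrable by (intro Henstock_Kurzweil_Integration.integral_combine) auto
  then show ?thesis using pos neg by simp
qed

lemma capacity_conjugate:
  assumes "capacity M V"
  shows "capacity M (conjugate_capacity M V)"
  using assms unfolding capacity_def conjugate_capacity_def
  by (auto simp: Diff_mono sets.Diff sets.top)

lemma choquet_integral_eq_integral:
  assumes \<mu>: "capacity M \<mu>" and \<xi>: "\<xi> \<in> borel_measurable M"
    and range: "\<And>\<omega>. \<omega> \<in> space M \<Longrightarrow> a \<le> \<xi> \<omega> \<and> \<xi> \<omega> < b" and "a \<le> 0" "0 \<le> b"
  shows "choquet_integral M \<mu> \<xi> = a + integral {a..b} (\<lambda>t. \<mu> {\<omega>\<in>space M. t \<le> \<xi> \<omega>})"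
proof -
  let ?g = "\<lambda>t. \<mu> {\<omega>\<in>space M. t \<le> \<xi> \<omega>}"
  have level: "{\<omega>\<in>space M. t \<le> \<xi> \<omega>} \<in> sets M" for t using \<xi> by measurable
  have mono: "\<mu> A \<le> \<mu> B" if "A \<in> sets M" "B \<in> sets M" "A \<subseteq> B" for A B
    using \<mu> that unfolding capacity_def by blast
  have anti: "antimono ?g" by (intro antimonoI mono level) auto
  have unit: "0 \<le> ?g t" "?g t \<le> 1" for t using \<mu> level unfolding capacity_def by auto
  have below: "?g t = 1" if "t \<le> a" for t
  proof -
    have "{\<omega>\<in>space M. t \<le> \<xi> \<omega>} = space M" using range that by force
    then show ?thesis using \<mu> unfolding capacity_def by (simp only:)
  qed
  have above: "?g t = 0" if "b \<le> t" for t
  proof -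
    have "{\<omega>\<in>space M. t \<le> \<xi> \<omega>} = {}" using range that by force
    then show ?thesis using \<mu> unfolding capacity_def by (simp only:)
  qed
  show ?thesis
    unfolding choquet_integral_def by (rule choquet_formula_antitone[OF anti unit assms(4,5) below above])
qed

section \<open>Linear functionals dominated by a capacity\<close>

lemma le_grid_count:
  fixes a d x :: real
  assumes "0 < d" "a \<le> x" "x \<le> a + real m * d"
  shows "x \<le> a + d * (\<Sum>j<m. if a + real j * d \<le> x then 1 else 0)"
proof -
  have bound: "min (x - a) (real k * d) \<le> d * (\<Sum>j<k. if a + real j * d \<le> x then 1 else 0)" for k
  proof (induction k)
    case (Suc k)
    then show ?case by (cases "a + real k * d \<le> x") (auto simp: algebra_simps)
  qed (use assms in simp)
  have "min (x - a) (real m * d) = x - a" using assms(3) by simp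
  then show ?thesis using bound[of m] by linarith
qed

lemma grid_count_le:
  fixes a d x :: real
  assumes "0 < d" "a \<le> x"
  shows "a + d * (\<Sum>j<m. if a + (real j + 1) * d \<le> x then 1 else 0) \<le> x"
proof -
  have bound: "d * (\<Sum>j<k. if a + (real j + 1) * d \<le> x then 1 else 0) \<le> min (x - a) (real k * d)" for k
  proof (induction k)
    case (Suc k)
    then show ?case using assms by (cases "a + (real k + 1) * d \<le> x") (auto simp: algebra_simps)
  qed (use assms in simp)
  then show ?thesis using bound[of m] min.cobounded1[of "x - a" "real m * d"] by linarith
qed

lemma le_of_le_add_divide_nat:
  fixes x y c :: real
  assumes "\<And>m. 1 \<le> m \<Longrightarrow> x \<le> y + c / real m"
  shows "x \<le> y"
proof (rule field_le_epsilon)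
  fix e :: real assume e: "0 < e"
  obtain m :: nat where m: "max c 0 / e < real m" using reals_Archimedean2 by blast
  have "0 \<le> max c 0 / e" using e by simp
  then have pos: "0 < real m" using m by linarith
  have "max c 0 < real m * e" using m e by (simp add: pos_divide_less_eq)
  then have "c / real m \<le> e" using pos by (simp add: pos_divide_le_eq mult.commute)
  moreover have "1 \<le> m" using pos by simp
  ultimately show "x \<le> y + e" using assms[of m] by linarith
qed

locale capacity_space =
  fixes M :: "'a measure" and V :: "'a set \<Rightarrow> real"
  assumes capacity: "capacity M V"
begin

abbreviation BF :: "('a \<Rightarrow> real) set" where
  "BF \<equiv> bounded_functions (space M)"

lemma V_nonneg: "A \<in> sets M \<Longrightarrow> 0 \<le> V A"
  and V_le_1: "A \<in> sets M \<Longrightarrow> V A \<le> 1"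
  and V_empty [simp]: "V {} = 0"
  and V_space [simp]: "V (space M) = 1"
  and V_mono: "A \<in> sets M \<Longrightarrow> B \<in> sets M \<Longrightarrow> A \<subseteq> B \<Longrightarrow> V A \<le> V B"
  using capacity unfolding capacity_def by auto

lemma space_nonempty: "space M \<noteq> {}"
  using V_space V_empty by force

end

locale dominated_functional = capacity_space +
  fixes L :: "('a \<Rightarrow> real) \<Rightarrow> real"
  assumes L_add: "f \<in> BF \<Longrightarrow> g \<in> BF \<Longrightarrow> L (\<lambda>x. f x + g x) = L f + L g"
    and L_scale: "f \<in> BF \<Longrightarrow> L (\<lambda>x. r * f x) = r * L f"
    and L_le_bound: "f \<in> BF \<Longrightarrow> (\<And>\<omega>. \<omega> \<in> space M \<Longrightarrow> f \<omega> \<le> B) \<Longrightarrow> L f \<le> B"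
    and L_indicator_le: "A \<in> sets M \<Longrightarrow> L (indicator A) \<le> V A"
begin

lemma L_diff: "f \<in> BF \<Longrightarrow> g \<in> BF \<Longrightarrow> L (\<lambda>x. f x - g x) = L f - L g"
  using L_add[of f "\<lambda>x. (-1) * g x"] L_scale[of g "-1"] bounded_functions_scale[of g _ "-1"] by simp

lemma L_ge_bound: "f \<in> BF \<Longrightarrow> (\<And>\<omega>. \<omega> \<in> space M \<Longrightarrow> m \<le> f \<omega>) \<Longrightarrow> m \<le> L f"
  using L_le_bound[OF bounded_functions_scale[of f _ "-1"], of "- m"] L_scale[of f "-1"] by force

lemma L_const [simp]: "L (\<lambda>_. c) = c"
  using L_le_bound[OF bounded_functions_const, of c c] L_ge_bound[OF bounded_functions_const, of c c]
  by simp

lemma L_mono: "f \<in> BF \<Longrightarrow> g \<in> BF \<Longrightarrow> (\<And>\<omega>. \<omega> \<in> space M \<Longrightarrow> f \<omega> \<le> g \<omega>) \<Longrightarrow> L f \<le> L g"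
  using L_ge_bound[OF bounded_functions_diff, of g f 0] L_diff[of g f] by simp

lemma L_cong: "f \<in> BF \<Longrightarrow> g \<in> BF \<Longrightarrow> (\<And>\<omega>. \<omega> \<in> space M \<Longrightarrow> f \<omega> = g \<omega>) \<Longrightarrow> L f = L g"
  by (metis L_mono order.antisym order_refl)

lemma L_sum:
  fixes m :: nat
  shows "(\<And>j. j < m \<Longrightarrow> F j \<in> BF) \<Longrightarrow> L (\<lambda>\<omega>. \<Sum>j<m. F j \<omega>) = (\<Sum>j<m. L (F j))"
proof (induction m)
  case (Suc m)
  then show ?case using L_add[OF bounded_functions_sum, of m F "F m"] by simp
qed (use L_const[of 0] in simp)

lemma L_indicator_ge: "A \<in> sets M \<Longrightarrow> conjugate_capacity M V A \<le> L (indicator A)"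
proof -
  assume A: "A \<in> sets M"
  have "L (\<lambda>_. 1) = L (\<lambda>\<omega>. indicator A \<omega> + indicator (space M - A) \<omega>)"
    using sets.sets_into_space[OF A]
    by (intro L_cong[OF bounded_functions_const bounded_functions_add[OF
          bounded_functions_indicator bounded_functions_indicator]]) (auto simp: indicator_def)
  then have "1 = L (indicator A) + L (indicator (space M - A))"
    by (simp add: L_add bounded_functions_indicator)
  moreover have "L (indicator (space M - A)) \<le> V (space M - A)" using A by (intro L_indicator_le) auto
  ultimately show ?thesis unfolding conjugate_capacity_def by simp
qed

lemma L_ge_restriction:
  assumes f: "f \<in> BF" and K: "\<And>\<omega>. \<omega> \<in> space M \<Longrightarrow> \<bar>f \<omega>\<bar> \<le> K" "0 \<le> K" and E: "E \<in> sets M"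
  shows "L (\<lambda>\<omega>. f \<omega> * indicator E \<omega>) - K * V (space M - E) \<le> L f"
proof -
  let ?fE = "\<lambda>\<omega>. f \<omega> * indicator E \<omega>" and ?fC = "\<lambda>\<omega>. f \<omega> * indicator (space M - E) \<omega>"
  have "L f = L (\<lambda>\<omega>. ?fE \<omega> + ?fC \<omega>)"
    using sets.sets_into_space[OF E] by (intro L_cong[OF f bounded_functions_add[OF
        bounded_functions_mult_indicator[OF f] bounded_functions_mult_indicator[OF f]]])
      (auto simp: indicator_def)
  also have "\<dots> = L ?fE + L ?fC"
    by (rule L_add[OF bounded_functions_mult_indicator[OF f] bounded_functions_mult_indicator[OF f]])
  finally have "L f = L ?fE + L ?fC" .
  moreover have "L (\<lambda>\<omega>. - K * indicator (space M - E) \<omega>) \<le> L ?fC"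
  proof (rule L_mono[OF bounded_functions_scale[OF bounded_functions_indicator] bounded_functions_mult_indicator[OF f]])
    fix \<omega> assume "\<omega> \<in> space M"
    then show "- K * indicator (space M - E) \<omega> \<le> f \<omega> * indicator (space M - E) \<omega>"
      using K(1)[of \<omega>] by (auto simp: indicator_def abs_le_iff)
  qed
  moreover have "L (\<lambda>\<omega>. - K * indicator (space M - E) \<omega>) = - K * L (indicator (space M - E))"
    by (rule L_scale[OF bounded_functions_indicator])
  moreover have "- K * V (space M - E) \<le> - K * L (indicator (space M - E))"
    using L_indicator_le[of "space M - E"] E K(2) by (simp add: mult_left_mono)
  ultimately show ?thesis by linarith
qed

lemma step_function_bounded:
  fixes m :: nat
  shows "(\<lambda>\<omega>. c + d * (\<Sum>j<m. indicator (E j) \<omega>)) \<in> BF"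
  by (rule bounded_functions_add[OF bounded_functions_const bounded_functions_scale[OF
        bounded_functions_sum[of m "\<lambda>j. indicator (E j)", OF bounded_functions_indicator]]])

lemma L_step_function:
  fixes m :: nat
  shows "L (\<lambda>\<omega>. c + d * (\<Sum>j<m. indicator (E j) \<omega>)) = c + d * (\<Sum>j<m. L (indicator (E j)))"
proof -
  have s: "(\<lambda>\<omega>. \<Sum>j<m. indicator (E j) \<omega>) \<in> BF"
    by (rule bounded_functions_sum) (rule bounded_functions_indicator)
  then show ?thesis
    using L_add[OF bounded_functions_const bounded_functions_scale[OF s]] L_scale[OF s]
      L_sum[of m "\<lambda>j. indicator (E j)", OF bounded_functions_indicator] by simp
qed

text \<open>Both bounds compare \<open>\<xi>\<close> with step functions on a grid of mesh \<open>d\<close>; the Riemann sums of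
  the resulting level-set capacities approximate the Choquet integrals up to \<open>d\<close>.\<close>

lemma L_le_choquet_integral:
  assumes \<xi>: "\<xi> \<in> borel_measurable M" and K: "\<And>\<omega>. \<omega> \<in> space M \<Longrightarrow> \<bar>\<xi> \<omega>\<bar> \<le> K"
  shows "L \<xi> \<le> choquet_integral M V \<xi>"
proof -
  define a where "a = - \<bar>K\<bar> - 1"
  define b where "b = \<bar>K\<bar> + 1"
  define level where "level t = {\<omega>\<in>space M. t \<le> \<xi> \<omega>}" for t
  have level: "level t \<in> sets M" for t unfolding level_def using \<xi> by measurable
  have indicator_level: "indicator (level t) \<omega> = (if t \<le> \<xi> \<omega> then 1 else 0)" if "\<omega> \<in> space M" for t \<omega>
    using that unfolding level_def by simp
  have range: "a \<le> \<xi> \<omega> \<and> \<xi> \<omega> < b" if "\<omega> \<in> space M" for \<omega>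
    using K[OF that] unfolding a_def b_def by (auto simp: abs_le_iff)
  have ab: "a \<le> 0" "0 \<le> b" "a < b" unfolding a_def b_def by auto
  have anti: "antimono (\<lambda>t. V (level t))" by (intro antimonoI V_mono level) (auto simp: level_def)
  have "L \<xi> \<le> choquet_integral M V \<xi> + (b - a) / real m" if m: "1 \<le> m" for m
  proof -
    define d where "d = (b - a) / real m"
    have d: "0 < d" and md: "a + real m * d = b" unfolding d_def using m ab by auto
    have "L \<xi> \<le> L (\<lambda>\<omega>. a + d * (\<Sum>j<m. indicator (level (a + real j * d)) \<omega>))"
    proof (rule L_mono)
      fix \<omega> assume \<omega>: "\<omega> \<in> space M"
      have "\<xi> \<omega> \<le> a + real m * d" using range[OF \<omega>] md by simp
      then show "\<xi> \<omega> \<le> a + d * (\<Sum>j<m. indicator (level (a + real j * d)) \<omega>)"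
        using le_grid_count[OF d conjunct1[OF range[OF \<omega>]]] by (simp only: indicator_level[OF \<omega>])
    qed (use K in \<open>auto intro: bounded_functionsI step_function_bounded\<close>)
    also have "\<dots> \<le> a + d * (\<Sum>j<m. V (level (a + real j * d)))"
      unfolding L_step_function using d level by (intro add_left_mono mult_left_mono sum_mono L_indicator_le) auto
    also have "\<dots> \<le> a + integral {a..b} (\<lambda>t. V (level t)) + d"
      using antitone_riemann_sums(1)[OF anti V_nonneg[OF level] V_le_1[OF level] d, where m = m and a = a] md by simp
    also have "\<dots> = choquet_integral M V \<xi> + d"
      using choquet_integral_eq_integral[OF capacity \<xi> range ab(1,2)] by (simp add: level_def)
    finally show ?thesis unfolding d_def .
  qed
  then show ?thesis by (rule le_of_le_add_divide_nat)
qed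

lemma choquet_integral_conjugate_le_L:
  assumes \<xi>: "\<xi> \<in> borel_measurable M" and K: "\<And>\<omega>. \<omega> \<in> space M \<Longrightarrow> \<bar>\<xi> \<omega>\<bar> \<le> K"
  shows "choquet_integral M (conjugate_capacity M V) \<xi> \<le> L \<xi>"
proof -
  define v where "v = conjugate_capacity M V"
  have v: "capacity M v" unfolding v_def using capacity by (rule capacity_conjugate)
  define a where "a = - \<bar>K\<bar> - 1"
  define b where "b = \<bar>K\<bar> + 1"
  define level where "level t = {\<omega>\<in>space M. t \<le> \<xi> \<omega>}" for t
  have level: "level t \<in> sets M" for t unfolding level_def using \<xi> by measurable
  have indicator_level: "indicator (level t) \<omega> = (if t \<le> \<xi> \<omega> then 1 else 0)" if "\<omega> \<in> space M" for t \<omega>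
    using that unfolding level_def by simp
  have range: "a \<le> \<xi> \<omega> \<and> \<xi> \<omega> < b" if "\<omega> \<in> space M" for \<omega>
    using K[OF that] unfolding a_def b_def by (auto simp: abs_le_iff)
  have ab: "a \<le> 0" "0 \<le> b" "a < b" unfolding a_def b_def by auto
  have v_unit: "0 \<le> v (level t)" "v (level t) \<le> 1" for t using v level unfolding capacity_def by auto
  have v_mono: "v A \<le> v B" if "A \<in> sets M" "B \<in> sets M" "A \<subseteq> B" for A B
    using v that unfolding capacity_def by blast
  have anti: "antimono (\<lambda>t. v (level t))" by (intro antimonoI v_mono level) (auto simp: level_def)
  have "choquet_integral M v \<xi> \<le> L \<xi> + (b - a) / real m" if m: "1 \<le> m" for m
  proof -
    define d where "d = (b - a) / real m"
    have d: "0 < d" and md: "a + real m * d = b" unfolding d_def using m ab by auto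
    have "choquet_integral M v \<xi> = a + integral {a..b} (\<lambda>t. v (level t))"
      using choquet_integral_eq_integral[OF v \<xi> range ab(1,2)] by (simp add: level_def)
    also have "\<dots> \<le> a + d * (\<Sum>j<m. v (level (a + (real j + 1) * d))) + d"
      using antitone_riemann_sums(2)[OF anti v_unit d, where m = m and a = a] md by simp
    also have "a + d * (\<Sum>j<m. v (level (a + (real j + 1) * d))) \<le>
        a + d * (\<Sum>j<m. L (indicator (level (a + (real j + 1) * d))))"
      unfolding v_def using d level by (intro add_left_mono mult_left_mono sum_mono L_indicator_ge) auto
    also have "\<dots> \<le> L \<xi>"
      unfolding L_step_function[symmetric]
    proof (rule L_mono)
      fix \<omega> assume \<omega>: "\<omega> \<in> space M"
      show "a + d * (\<Sum>j<m. indicator (level (a + (real j + 1) * d)) \<omega>) \<le> \<xi> \<omega>"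
        using grid_count_le[OF d conjunct1[OF range[OF \<omega>]]] by (simp only: indicator_level[OF \<omega>])
    qed (use K in \<open>auto intro: bounded_functionsI step_function_bounded\<close>)
    finally show ?thesis unfolding d_def by simp
  qed
  then show ?thesis unfolding v_def by (rule le_of_le_add_divide_nat)
qed

end

section \<open>Concave capacities: no arbitrage\<close>

lemma continuous_capacity_incseqD:
  "continuous_capacity M V \<Longrightarrow> range A \<subseteq> sets M \<Longrightarrow> incseq A \<Longrightarrow> (\<lambda>n. V (A n)) \<longlonglongrightarrow> V (\<Union>n. A n)"
  and continuous_capacity_decseqD:
  "continuous_capacity M V \<Longrightarrow> range A \<subseteq> sets M \<Longrightarrow> decseq A \<Longrightarrow> (\<lambda>n. V (A n)) \<longlonglongrightarrow> V (\<Inter>n. A n)"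
  unfolding continuous_capacity_def by auto

locale concave_capacity_space = capacity_space +
  assumes concave: "concave_capacity M V"
begin

lemma V_Un_Int_le: "A \<in> sets M \<Longrightarrow> B \<in> sets M \<Longrightarrow> V (A \<union> B) + V (A \<inter> B) \<le> V A + V B"
  using concave unfolding concave_capacity_def by blast

lemma V_subadditive: "A \<in> sets M \<Longrightarrow> B \<in> sets M \<Longrightarrow> V (A \<union> B) \<le> V A + V B"
  using V_Un_Int_le[of A B] V_nonneg[of "A \<inter> B"] by auto

lemma V_null_Un: "A \<in> sets M \<Longrightarrow> B \<in> sets M \<Longrightarrow> V A = 0 \<Longrightarrow> V B = 0 \<Longrightarrow> V (A \<union> B) = 0"
  using V_subadditive[of A B] V_nonneg[of "A \<union> B"] by auto

lemma V_null_UN: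
  assumes "continuous_capacity M V" "countable I"
    and N: "\<And>i. i \<in> I \<Longrightarrow> N i \<in> sets M" "\<And>i. i \<in> I \<Longrightarrow> V (N i) = 0"
  shows "V (\<Union>i\<in>I. N i) = 0"
proof (cases "I = {}")
  case False
  define F where "F k = (\<Union>n<k. N (from_nat_into I n))" for k
  have in_I: "from_nat_into I n \<in> I" for n using from_nat_into[OF False] .
  have F: "F k \<in> sets M" for k unfolding F_def using N(1)[OF in_I] by blast
  have F0: "V (F k) = 0" for k
  proof (induction k)
    case (Suc k)
    have "F (Suc k) = F k \<union> N (from_nat_into I k)" unfolding F_def by (auto simp: lessThan_Suc)
    then show ?case using V_null_Un[OF F N(1)[OF in_I] Suc N(2)[OF in_I]] by simp
  qed (simp add: F_def)
  have "incseq F" by (rule incseq_SucI) (auto simp: F_def lessThan_Suc)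
  then have "(\<lambda>k. V (F k)) \<longlonglongrightarrow> V (\<Union>k. F k)"
    using F by (intro continuous_capacity_incseqD[OF assms(1)]) auto
  then have "V (\<Union>k. F k) = 0" using F0 by (simp add: LIMSEQ_const_iff)
  moreover have "(\<Union>k. F k) = (\<Union>i\<in>I. N i)"
  proof
    show "(\<Union>k. F k) \<subseteq> (\<Union>i\<in>I. N i)" unfolding F_def using in_I by blast
    show "(\<Union>i\<in>I. N i) \<subseteq> (\<Union>k. F k)"
    proof
      fix x assume "x \<in> (\<Union>i\<in>I. N i)"
      then obtain i where "i \<in> I" "x \<in> N i" by blast
      moreover obtain n where "from_nat_into I n = i"
        using from_nat_into_surj[OF assms(2) \<open>i \<in> I\<close>] ..
      ultimately have "x \<in> F (Suc n)" unfolding F_def by blast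
      then show "x \<in> (\<Union>k. F k)" by blast
    qed
  qed
  ultimately show ?thesis by simp
qed simp

definition covering_number :: "'a set list \<Rightarrow> 'a \<Rightarrow> nat" where
  "covering_number Bs \<omega> = length (filter (\<lambda>B. \<omega> \<in> B) Bs)"

definition covering_level :: "'a set list \<Rightarrow> nat \<Rightarrow> 'a set" where
  "covering_level Bs j = {\<omega>\<in>space M. j \<le> covering_number Bs \<omega>}"

lemma covering_level_Cons:
  "A \<subseteq> space M \<Longrightarrow> covering_level (A # Bs) j = covering_level Bs j \<union> (A \<inter> covering_level Bs (j - 1))"
  unfolding covering_level_def covering_number_def by auto

lemma covering_level_sets: "set Bs \<subseteq> sets M \<Longrightarrow> covering_level Bs j \<in> sets M"
proof (induction Bs arbitrary: j)
  case (Cons A Bs)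
  then show ?case using covering_level_Cons[OF sets.sets_into_space, of A Bs j] by auto
qed (cases j, auto simp: covering_level_def covering_number_def)

text \<open>Adding \<open>A\<close> to the list enlarges the \<open>j\<close>-th level by \<open>A \<inter> level (j - 1)\<close>; by concavity the
  capacity grows by at most \<open>V (A \<inter> level (j - 1)) - V (A \<inter> level j)\<close>, which telescopes to \<open>V A\<close>.\<close>

lemma sum_V_covering_levels_le:
  "set Bs \<subseteq> sets M \<Longrightarrow> (\<Sum>j\<in>{1..length Bs}. V (covering_level Bs j)) \<le> (\<Sum>B\<leftarrow>Bs. V B)"
proof (induction Bs)
  case (Cons A Bs)
  have A: "A \<in> sets M" and Bs: "set Bs \<subseteq> sets M" using Cons.prems by auto
  define n where "n = length Bs"
  define u where "u j = V (A \<inter> covering_level Bs j)" for j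
  have step: "V (covering_level (A # Bs) j) \<le> V (covering_level Bs j) + (u (j - 1) - u j)" if "1 \<le> j" for j
  proof -
    let ?B = "covering_level Bs j" and ?C = "A \<inter> covering_level Bs (j - 1)"
    have "?B \<inter> ?C = A \<inter> covering_level Bs j"
      using that by (auto simp: covering_level_def)
    moreover have "V (?B \<union> ?C) + V (?B \<inter> ?C) \<le> V ?B + V ?C"
      using A covering_level_sets[OF Bs] by (intro V_Un_Int_le) auto
    ultimately show ?thesis
      unfolding covering_level_Cons[OF sets.sets_into_space[OF A]] u_def by simp
  qed
  have top_empty: "covering_level Bs (Suc n) = {}"
    using length_filter_le[of _ Bs] unfolding covering_level_def covering_number_def n_def
    by (auto simp: not_le le_imp_less_Suc)
  have "(\<Sum>j\<in>{1..Suc n}. u (j - 1) - u j) = (\<Sum>i<Suc n. u i - u (Suc i))"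
    by (rule sum.reindex_bij_witness[of _ Suc "\<lambda>j. j - 1"]) auto
  also have "\<dots> = u 0 - u (Suc n)" by (rule sum_lessThan_telescope')
  also have "u 0 = V A"
    using sets.sets_into_space[OF A] unfolding u_def covering_level_def by (simp add: Int_absorb2)
  also have "u (Suc n) = 0" unfolding u_def top_empty by simp
  finally have telescope: "(\<Sum>j\<in>{1..Suc n}. u (j - 1) - u j) = V A" by simp
  have "(\<Sum>j\<in>{1..Suc n}. V (covering_level (A # Bs) j))
      \<le> (\<Sum>j\<in>{1..Suc n}. V (covering_level Bs j) + (u (j - 1) - u j))"
    using step by (intro sum_mono) auto
  also have "\<dots> = (\<Sum>j\<in>{1..n}. V (covering_level Bs j)) + V A"
    using top_empty by (simp only: sum.distrib telescope) simp
  finally show ?case using Cons.IH[OF Bs] unfolding n_def by simp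
qed simp

lemma integer_no_arbitrage:
  assumes Bs: "set Bs \<subseteq> sets M" and k: "\<And>\<omega>. \<omega> \<in> space M \<Longrightarrow> k \<le> covering_number Bs \<omega>"
  shows "real k \<le> (\<Sum>B\<leftarrow>Bs. V B)"
proof -
  obtain \<omega> where "\<omega> \<in> space M" using space_nonempty by auto
  moreover have "covering_number Bs \<omega> \<le> length Bs"
    unfolding covering_number_def by (rule length_filter_le)
  ultimately have "k \<le> length Bs" using k by (meson order_trans)
  have "covering_level Bs j = space M" if "j \<le> k" for j
    using order_trans[OF that k] by (auto simp: covering_level_def)
  then have "real k = (\<Sum>j\<in>{1..k}. V (covering_level Bs j))" by simp
  also have "\<dots> \<le> (\<Sum>j\<in>{1..length Bs}. V (covering_level Bs j))"
    using \<open>k \<le> length Bs\<close> V_nonneg covering_level_sets[OF Bs] by (intro sum_mono2) auto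
  also have "\<dots> \<le> (\<Sum>B\<leftarrow>Bs. V B)" by (rule sum_V_covering_levels_le[OF Bs])
  finally show ?thesis .
qed

text \<open>Real weights are reduced to integer ones by scaling with a large \<open>D\<close> and rounding up;
  the rounding costs at most one unit per set.\<close>

lemma rounded_integer_hedge:
  assumes xs: "\<forall>(l, A)\<in>set xs. 0 \<le> l \<and> A \<in> sets M" and D: "0 < D"
  obtains Bs where "set Bs \<subseteq> sets M"
    "\<And>\<omega>. D * (\<Sum>(l, A)\<leftarrow>xs. l * indicator A \<omega>) \<le> real (covering_number Bs \<omega>)"
    "(\<Sum>B\<leftarrow>Bs. V B) \<le> D * (\<Sum>(l, A)\<leftarrow>xs. l * V A) + real (length xs)"
  using xs
proof (induction xs arbitrary: thesis)
  case Nil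
  show ?case by (rule Nil(1)[of "[]"]) (auto simp: covering_number_def)
next
  case (Cons x xs)
  obtain l A where x: "x = (l, A)" by (cases x)
  have l: "0 \<le> l" and A: "A \<in> sets M" using Cons.prems(2) x by auto
  obtain Bs where Bs: "set Bs \<subseteq> sets M"
    "\<And>\<omega>. D * (\<Sum>(l, A)\<leftarrow>xs. l * indicator A \<omega>) \<le> real (covering_number Bs \<omega>)"
    "(\<Sum>B\<leftarrow>Bs. V B) \<le> D * (\<Sum>(l, A)\<leftarrow>xs. l * V A) + real (length xs)"
    using Cons.IH Cons.prems(2) by auto
  define r where "r = nat \<lceil>l * D\<rceil>"
  have "real r = of_int \<lceil>l * D\<rceil>" unfolding r_def using l D by simp
  then have r: "l * D \<le> real r" "real r \<le> l * D + 1"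
    using le_of_int_ceiling[of "l * D"] of_int_ceiling_le_add_one[of "l * D"] by linarith+
  show ?case
  proof (rule Cons.prems(1)[of "replicate r A @ Bs"])
    show "set (replicate r A @ Bs) \<subseteq> sets M" using A Bs(1) by auto
    fix \<omega>
    show "D * (\<Sum>(l, A)\<leftarrow>x # xs. l * indicator A \<omega>) \<le> real (covering_number (replicate r A @ Bs) \<omega>)"
      using Bs(2)[of \<omega>] r(1) by (auto simp: x covering_number_def indicator_def algebra_simps)
  next
    have "real r * V A \<le> D * (l * V A) + 1"
      using mult_right_mono[OF r(2) V_nonneg[OF A]] V_le_1[OF A] by (simp add: algebra_simps)
    then show "(\<Sum>B\<leftarrow>replicate r A @ Bs. V B) \<le> D * (\<Sum>(l, A)\<leftarrow>x # xs. l * V A) + real (length (x # xs))"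
      using Bs(3) by (simp add: x sum_list_replicate algebra_simps)
  qed
qed

theorem no_arbitrage:
  assumes xs: "\<forall>(l, A)\<in>set xs. 0 \<le> l \<and> A \<in> sets M"
    and k: "\<And>\<omega>. \<omega> \<in> space M \<Longrightarrow> k \<le> (\<Sum>(l, A)\<leftarrow>xs. l * indicator A \<omega>)"
  shows "k \<le> (\<Sum>(l, A)\<leftarrow>xs. l * V A)"
proof (rule ccontr)
  let ?price = "\<Sum>(l, A)\<leftarrow>xs. l * V A"
  assume "\<not> k \<le> ?price"
  then have gap: "0 < k - ?price" by simp
  obtain n :: nat where "real (length xs) / (k - ?price) < real n" using reals_Archimedean2 by blast
  then have n: "real (length xs) < real n * (k - ?price)" using gap by (simp add: pos_divide_less_eq)
  define D where "D = real (Suc n)"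
  have D: "0 < D" "real (length xs) < D * (k - ?price)"
    using n gap unfolding D_def by (auto simp: algebra_simps)
  obtain Bs where Bs: "set Bs \<subseteq> sets M"
    "\<And>\<omega>. D * (\<Sum>(l, A)\<leftarrow>xs. l * indicator A \<omega>) \<le> real (covering_number Bs \<omega>)"
    "(\<Sum>B\<leftarrow>Bs. V B) \<le> D * ?price + real (length xs)"
    using rounded_integer_hedge[OF xs D(1)] by blast
  have "nat \<lceil>D * k\<rceil> \<le> covering_number Bs \<omega>" if "\<omega> \<in> space M" for \<omega>
    using order_trans[OF mult_left_mono[OF k[OF that]] Bs(2)] D(1) by (simp add: nat_le_iff ceiling_le_iff)
  then have "real (nat \<lceil>D * k\<rceil>) \<le> (\<Sum>B\<leftarrow>Bs. V B)" by (rule integer_no_arbitrage[OF Bs(1)])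
  then have "D * k \<le> D * ?price + real (length xs)" using Bs(3) by linarith
  then show False using D(2) by (simp add: algebra_simps)
qed


definition superhedge :: "('a \<Rightarrow> real) \<Rightarrow> real \<Rightarrow> (real \<times> 'a set) list \<Rightarrow> bool" where
  "superhedge f c xs \<longleftrightarrow> (\<forall>(l, A)\<in>set xs. 0 \<le> l \<and> A \<in> sets M) \<and>
     (\<forall>\<omega>\<in>space M. f \<omega> \<le> c + (\<Sum>(l, A)\<leftarrow>xs. l * indicator A \<omega>))"

definition hedge_price :: "real \<Rightarrow> (real \<times> 'a set) list \<Rightarrow> real" where
  "hedge_price c xs = c + (\<Sum>(l, A)\<leftarrow>xs. l * V A)"

lemma superhedge_const: "(\<And>\<omega>. \<omega> \<in> space M \<Longrightarrow> f \<omega> \<le> c) \<Longrightarrow> superhedge f c []"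
  unfolding superhedge_def by simp

lemma superhedge_add:
  assumes "superhedge f c xs" "superhedge g d ys"
  shows "superhedge (\<lambda>\<omega>. f \<omega> + g \<omega>) (c + d) (xs @ ys)"
  using assms unfolding superhedge_def by (auto simp: algebra_simps intro: add_mono[THEN order_trans])

lemma hedge_price_append: "hedge_price (c + d) (xs @ ys) = hedge_price c xs + hedge_price d ys"
  unfolding hedge_price_def by simp

lemma superhedge_sum:
  assumes "\<And>j. j < m \<Longrightarrow> superhedge (F j) (C j) (X j)"
  shows "superhedge (\<lambda>\<omega>. \<Sum>j<m. F j \<omega>) (\<Sum>j<m. C j) (concat (map X [0..<m]))"
    and "hedge_price (\<Sum>j<m. C j) (concat (map X [0..<m])) = (\<Sum>j<m. hedge_price (C j) (X j))"
  using assms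
proof (induction m)
  case 0
  { case 1 show ?case by (simp add: superhedge_def) }
  { case 2 show ?case by (simp add: hedge_price_def) }
next
  case (Suc m)
  { case 1 show ?case using superhedge_add[OF Suc.IH(1) 1[of m]] 1 by simp }
  { case 2 show ?case using Suc.IH(2) 2 hedge_price_append[of "\<Sum>j<m. C j"] by simp }
qed

lemma superhedge_scale:
  assumes "superhedge f c xs" "0 \<le> t"
  shows "superhedge (\<lambda>\<omega>. t * f \<omega>) (t * c) (map (\<lambda>(l, A). (t * l, A)) xs)"
proof -
  have "(\<Sum>(l, A)\<leftarrow>map (\<lambda>(l, A). (t * l, A)) xs. l * indicator A \<omega>) = t * (\<Sum>(l, A)\<leftarrow>xs. l * indicator A \<omega>)"
    for \<omega> by (induction xs) (auto simp: algebra_simps)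
  with assms show ?thesis
    unfolding superhedge_def by (auto simp: distrib_left[symmetric] intro!: mult_left_mono)
qed

lemma hedge_price_scale:
  "hedge_price (t * c) (map (\<lambda>(l, A). (t * l, A)) xs) = t * hedge_price c xs"
  unfolding hedge_price_def by (induction xs) (auto simp: algebra_simps)

lemma hedge_price_ge:
  assumes "superhedge f c xs" "\<And>\<omega>. \<omega> \<in> space M \<Longrightarrow> m \<le> f \<omega>"
  shows "m \<le> hedge_price c xs"
proof -
  have "m - c \<le> (\<Sum>(l, A)\<leftarrow>xs. l * V A)"
  proof (rule no_arbitrage)
    fix \<omega> assume "\<omega> \<in> space M"
    then show "m - c \<le> (\<Sum>(l, A)\<leftarrow>xs. l * indicator A \<omega>)"
      using assms unfolding superhedge_def by fastforce
  qed (use assms(1) in \<open>simp add: superhedge_def\<close>)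
  then show ?thesis unfolding hedge_price_def by simp
qed

end

section \<open>An invariant linear functional below a preserved concave capacity\<close>

locale capacity_preserving_map = concave_capacity_space +
  fixes \<theta> :: "'a \<Rightarrow> 'a"
  assumes \<theta>_measurable: "\<theta> \<in> M \<rightarrow>\<^sub>M M"
    and preserving: "preserves_capacity M V \<theta>"
begin

lemma funpow_measurable: "\<theta> ^^ n \<in> M \<rightarrow>\<^sub>M M"
  by (induction n) (auto intro: measurable_comp[OF _ \<theta>_measurable, unfolded comp_def])

lemma funpow_in_space: "\<omega> \<in> space M \<Longrightarrow> (\<theta> ^^ n) \<omega> \<in> space M"
  using measurable_space[OF funpow_measurable] .

lemma V_funpow_vimage: "A \<in> sets M \<Longrightarrow> V ((\<theta> ^^ n) -` A \<inter> space M) = V A"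
proof (induction n arbitrary: A)
  case (Suc n)
  have "(\<theta> ^^ Suc n) -` A \<inter> space M = (\<theta> ^^ n) -` (\<theta> -` A \<inter> space M) \<inter> space M"
    using measurable_space[OF \<theta>_measurable] funpow_in_space
    by (auto simp: funpow_swap1)
  also have "V \<dots> = V (\<theta> -` A \<inter> space M)"
    using Suc.IH measurable_sets[OF \<theta>_measurable Suc.prems] .
  also have "\<dots> = V A" using preserving Suc.prems unfolding preserves_capacity_def by blast
  finally show ?case .
qed (simp add: Int_absorb2 sets.sets_into_space)

lemma birkhoff_sum_measurable: "f \<in> borel_measurable M \<Longrightarrow> birkhoff_sum \<theta> n f \<in> borel_measurable M"
  unfolding birkhoff_sum_def[abs_def]
  by (intro borel_measurable_sum measurable_compose[OF funpow_measurable])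

lemma birkhoff_sum_abs_le:
  assumes "\<And>\<omega>. \<omega> \<in> space M \<Longrightarrow> \<bar>f \<omega>\<bar> \<le> K" "\<omega> \<in> space M"
  shows "\<bar>birkhoff_sum \<theta> n f \<omega>\<bar> \<le> real n * K"
proof -
  have "\<bar>birkhoff_sum \<theta> n f \<omega>\<bar> \<le> (\<Sum>k<n. \<bar>f ((\<theta> ^^ k) \<omega>)\<bar>)"
    unfolding birkhoff_sum_def by (rule sum_abs)
  also have "\<dots> \<le> (\<Sum>k<n. K)" using assms funpow_in_space by (intro sum_mono) auto
  finally show ?thesis by simp
qed

lemma birkhoff_sum_ge:
  "(\<And>\<omega>. \<omega> \<in> space M \<Longrightarrow> m \<le> f \<omega>) \<Longrightarrow> \<omega> \<in> space M \<Longrightarrow> real n * m \<le> birkhoff_sum \<theta> n f \<omega>"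
  unfolding birkhoff_sum_def using funpow_in_space sum_mono[of "{..<n}" "\<lambda>_. m"] by auto

lemma compose_\<theta>_bounded: "f \<in> BF \<Longrightarrow> (\<lambda>\<omega>. f (\<theta> \<omega>)) \<in> BF"
  using measurable_space[OF \<theta>_measurable] by (auto intro: bounded_functions_compose)

definition hedge_vimage :: "nat \<Rightarrow> (real \<times> 'a set) list \<Rightarrow> (real \<times> 'a set) list" where
  "hedge_vimage k xs = map (\<lambda>(l, A). (l, (\<theta> ^^ k) -` A \<inter> space M)) xs"

lemma superhedge_funpow:
  assumes "superhedge f c xs"
  shows "superhedge (\<lambda>\<omega>. f ((\<theta> ^^ k) \<omega>)) c (hedge_vimage k xs)"
proof -
  have "(\<Sum>(l, A)\<leftarrow>hedge_vimage k xs. l * indicator A \<omega>) = (\<Sum>(l, A)\<leftarrow>xs. l * indicator A ((\<theta> ^^ k) \<omega>))"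
    if "\<omega> \<in> space M" for \<omega>
    unfolding hedge_vimage_def using that by (induction xs) (auto simp: indicator_def)
  then show ?thesis
    using assms measurable_sets[OF funpow_measurable] funpow_in_space
    unfolding superhedge_def hedge_vimage_def by auto
qed

lemma hedge_price_vimage:
  assumes "superhedge f c xs"
  shows "hedge_price c (hedge_vimage k xs) = hedge_price c xs"
proof -
  have "\<forall>(l, A)\<in>set xs. A \<in> sets M" using assms unfolding superhedge_def by auto
  then show ?thesis unfolding hedge_price_def hedge_vimage_def
    by (induction xs) (auto simp: V_funpow_vimage)
qed

text \<open>Cutting a Birkhoff sum of length \<open>n * m\<close> into \<open>m\<close> blocks of length \<open>n\<close>, each block is
  superhedged by a pulled-back copy of a hedge of the first one, at the same price.\<close>

lemma superhedge_birkhoff_sum_mult: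
  assumes "superhedge (birkhoff_sum \<theta> n f) c xs"
  obtains ys where "superhedge (birkhoff_sum \<theta> (n * m) f) (real m * c) ys"
    "hedge_price (real m * c) ys = real m * hedge_price c xs"
proof
  let ?F = "\<lambda>j \<omega>. birkhoff_sum \<theta> n f ((\<theta> ^^ (j * n)) \<omega>)" and ?X = "\<lambda>j. hedge_vimage (j * n) xs"
  let ?ys = "concat (map ?X [0..<m])"
  have blocks: "superhedge (?F j) c (?X j)" for j using superhedge_funpow[OF assms] .
  have "birkhoff_sum \<theta> (n * m) f = (\<lambda>\<omega>. \<Sum>j<m. ?F j \<omega>)" by (rule ext) (rule birkhoff_sum_mult)
  then show "superhedge (birkhoff_sum \<theta> (n * m) f) (real m * c) ?ys"
    using superhedge_sum(1)[of m ?F "\<lambda>_. c" ?X, OF blocks] by simp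
  show "hedge_price (real m * c) ?ys = real m * hedge_price c xs"
    using superhedge_sum(2)[of m ?F "\<lambda>_. c" ?X, OF blocks] hedge_price_vimage[OF assms] by simp
qed

text \<open>The sublinear functional of the Hahn--Banach argument: the cheapest price per time step of
  superhedging a Birkhoff sum.\<close>

definition averaged_prices :: "('a \<Rightarrow> real) \<Rightarrow> real set" where
  "averaged_prices f =
     {hedge_price c xs / real n | n c xs. 1 \<le> n \<and> superhedge (birkhoff_sum \<theta> n f) c xs}"

definition upper_mean :: "('a \<Rightarrow> real) \<Rightarrow> real" where
  "upper_mean f = Inf (averaged_prices f)"

lemma averaged_prices_bound: "(\<And>\<omega>. \<omega> \<in> space M \<Longrightarrow> f \<omega> \<le> B) \<Longrightarrow> B \<in> averaged_prices f"
  unfolding averaged_prices_def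
  by (rule CollectI, rule exI[of _ 1], rule exI[of _ B], rule exI[of _ "[]"])
    (simp add: superhedge_const hedge_price_def)

lemma averaged_prices_ge:
  assumes "\<And>\<omega>. \<omega> \<in> space M \<Longrightarrow> m \<le> f \<omega>" "r \<in> averaged_prices f"
  shows "m \<le> r"
proof -
  obtain n c xs where r: "r = hedge_price c xs / real n" "1 \<le> n" "superhedge (birkhoff_sum \<theta> n f) c xs"
    using assms(2) unfolding averaged_prices_def by blast
  have "real n * m \<le> hedge_price c xs" using hedge_price_ge[OF r(3) birkhoff_sum_ge[OF assms(1)]] .
  also have "\<dots> = real n * r" using r(1,2) by simp
  finally show ?thesis using r(2) by simp
qed

lemma averaged_prices_bdd_below: "f \<in> BF \<Longrightarrow> bdd_below (averaged_prices f)"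
proof (erule bounded_functionsE)
  fix B assume B: "\<And>\<omega>. \<omega> \<in> space M \<Longrightarrow> \<bar>f \<omega>\<bar> \<le> B"
  have "- B \<le> f \<omega>" if "\<omega> \<in> space M" for \<omega> using B[OF that] by (auto simp: abs_le_iff)
  then have "\<forall>r\<in>averaged_prices f. - B \<le> r" using averaged_prices_ge by blast
  then show "bdd_below (averaged_prices f)" unfolding bdd_below_def by blast
qed

lemma averaged_prices_nonempty: "f \<in> BF \<Longrightarrow> averaged_prices f \<noteq> {}"
proof -
  assume "f \<in> BF"
  then obtain B where "\<forall>\<omega>\<in>space M. f \<omega> \<le> B" using bounded_functions_bdd_above by blast
  then have "B \<in> averaged_prices f" by (intro averaged_prices_bound) blast
  then show ?thesis by blast
qed

lemma upper_mean_le: "f \<in> BF \<Longrightarrow> r \<in> averaged_prices f \<Longrightarrow> upper_mean f \<le> r"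
  unfolding upper_mean_def by (rule cInf_lower[OF _ averaged_prices_bdd_below])

lemma upper_mean_greatest:
  "f \<in> BF \<Longrightarrow> (\<And>r. r \<in> averaged_prices f \<Longrightarrow> x \<le> r) \<Longrightarrow> x \<le> upper_mean f"
  unfolding upper_mean_def by (rule cInf_greatest[OF averaged_prices_nonempty])

lemma upper_mean_le_bound: "f \<in> BF \<Longrightarrow> (\<And>\<omega>. \<omega> \<in> space M \<Longrightarrow> f \<omega> \<le> B) \<Longrightarrow> upper_mean f \<le> B"
  by (rule upper_mean_le[OF _ averaged_prices_bound])

lemma upper_mean_indicator_le:
  assumes "A \<in> sets M"
  shows "upper_mean (indicator A) \<le> V A"
proof (rule upper_mean_le[OF bounded_functions_indicator])
  have "superhedge (birkhoff_sum \<theta> 1 (indicator A)) 0 [(1, A)]"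
    using assms unfolding superhedge_def by simp
  then have "hedge_price 0 [(1, A)] / real 1 \<in> averaged_prices (indicator A)"
    unfolding averaged_prices_def by blast
  then show "V A \<in> averaged_prices (indicator A)" by (simp add: hedge_price_def)
qed


lemma averaged_prices_add:
  assumes "r \<in> averaged_prices f" "s \<in> averaged_prices g"
  shows "r + s \<in> averaged_prices (\<lambda>\<omega>. f \<omega> + g \<omega>)"
proof -
  obtain n c xs where r: "r = hedge_price c xs / real n" "1 \<le> n" "superhedge (birkhoff_sum \<theta> n f) c xs"
    using assms(1) unfolding averaged_prices_def by blast
  obtain m d ys where s: "s = hedge_price d ys / real m" "1 \<le> m" "superhedge (birkhoff_sum \<theta> m g) d ys"
    using assms(2) unfolding averaged_prices_def by blast
  obtain xs' where xs': "superhedge (birkhoff_sum \<theta> (n * m) f) (real m * c) xs'"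
    "hedge_price (real m * c) xs' = real m * hedge_price c xs"
    using superhedge_birkhoff_sum_mult[OF r(3)] .
  obtain ys' where ys': "superhedge (birkhoff_sum \<theta> (m * n) g) (real n * d) ys'"
    "hedge_price (real n * d) ys' = real n * hedge_price d ys"
    using superhedge_birkhoff_sum_mult[OF s(3)] .
  have "birkhoff_sum \<theta> (n * m) (\<lambda>\<omega>. f \<omega> + g \<omega>) = (\<lambda>\<omega>. birkhoff_sum \<theta> (n * m) f \<omega> + birkhoff_sum \<theta> (m * n) g \<omega>)"
    by (rule ext) (simp add: birkhoff_sum_plus mult.commute)
  then have "superhedge (birkhoff_sum \<theta> (n * m) (\<lambda>\<omega>. f \<omega> + g \<omega>)) (real m * c + real n * d) (xs' @ ys')"
    using superhedge_add[OF xs'(1) ys'(1)] by simp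
  moreover have "hedge_price (real m * c + real n * d) (xs' @ ys') / real (n * m) = r + s"
    using r(1,2) s(1,2) xs'(2) ys'(2) by (simp add: hedge_price_append field_simps)
  moreover have "1 \<le> n * m" using r(2) s(2) by simp
  ultimately show ?thesis unfolding averaged_prices_def by (metis (mono_tags, lifting) mem_Collect_eq)
qed

lemma upper_mean_add:
  assumes f: "f \<in> BF" and g: "g \<in> BF"
  shows "upper_mean (\<lambda>\<omega>. f \<omega> + g \<omega>) \<le> upper_mean f + upper_mean g"
proof -
  have "upper_mean (\<lambda>\<omega>. f \<omega> + g \<omega>) - s \<le> upper_mean f" if s: "s \<in> averaged_prices g" for s
    using upper_mean_le[OF bounded_functions_add[OF f g] averaged_prices_add[OF _ s]]
    by (intro upper_mean_greatest[OF f]) (simp add: algebra_simps)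
  then have "upper_mean (\<lambda>\<omega>. f \<omega> + g \<omega>) - upper_mean f \<le> upper_mean g"
    by (intro upper_mean_greatest[OF g]) (simp add: algebra_simps)
  then show ?thesis by simp
qed

lemma averaged_prices_scale:
  assumes "r \<in> averaged_prices f" "0 < t"
  shows "t * r \<in> averaged_prices (\<lambda>\<omega>. t * f \<omega>)"
proof -
  obtain n c xs where r: "r = hedge_price c xs / real n" "1 \<le> n" "superhedge (birkhoff_sum \<theta> n f) c xs"
    using assms(1) unfolding averaged_prices_def by blast
  have "superhedge (birkhoff_sum \<theta> n (\<lambda>\<omega>. t * f \<omega>)) (t * c) (map (\<lambda>(l, A). (t * l, A)) xs)"
    using superhedge_scale[OF r(3)] assms(2) by (simp add: birkhoff_sum_scale[abs_def])
  moreover have "hedge_price (t * c) (map (\<lambda>(l, A). (t * l, A)) xs) / real n = t * r"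
    using r(1) by (simp add: hedge_price_scale)
  ultimately show ?thesis using r(2) unfolding averaged_prices_def by (metis (mono_tags, lifting) mem_Collect_eq)
qed

lemma upper_mean_scale_le:
  assumes f: "f \<in> BF" and t: "0 < t"
  shows "upper_mean (\<lambda>\<omega>. t * f \<omega>) \<le> t * upper_mean f"
proof -
  have "upper_mean (\<lambda>\<omega>. t * f \<omega>) / t \<le> upper_mean f"
    using upper_mean_le[OF bounded_functions_scale[OF f] averaged_prices_scale[OF _ t]] t
    by (intro upper_mean_greatest[OF f]) (simp add: field_simps)
  then show ?thesis using t by (simp add: field_simps)
qed

lemma upper_mean_scale:
  assumes f: "f \<in> BF" and t: "0 < t"
  shows "upper_mean (\<lambda>\<omega>. t * f \<omega>) = t * upper_mean f"
proof -
  have "(\<lambda>\<omega>. 1 / t * (t * f \<omega>)) = f" using t by (simp add: fun_eq_iff)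
  then have "upper_mean f \<le> 1 / t * upper_mean (\<lambda>\<omega>. t * f \<omega>)"
    using upper_mean_scale_le[OF bounded_functions_scale[OF f, of t], of "1 / t"] t by simp
  then have "t * upper_mean f \<le> upper_mean (\<lambda>\<omega>. t * f \<omega>)" using t by (simp add: field_simps)
  then show ?thesis using upper_mean_scale_le[OF f t] by simp
qed

text \<open>Birkhoff sums of a coboundary \<open>f \<circ> \<theta> - f\<close> telescope and stay bounded, so their averaged
  prices tend to \<open>0\<close>.\<close>

lemma upper_mean_coboundary_nonpos:
  assumes f: "f \<in> BF"
  shows "upper_mean (\<lambda>\<omega>. f (\<theta> \<omega>) - f \<omega>) \<le> 0"
proof -
  obtain B where B: "\<And>\<omega>. \<omega> \<in> space M \<Longrightarrow> \<bar>f \<omega>\<bar> \<le> B" using f bounded_functionsE by blast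
  have "upper_mean (\<lambda>\<omega>. f (\<theta> \<omega>) - f \<omega>) \<le> 0 + 2 * B / real n" if n: "1 \<le> n" for n
  proof (rule upper_mean_le[OF bounded_functions_diff[OF compose_\<theta>_bounded[OF f] f]])
    have "birkhoff_sum \<theta> n (\<lambda>\<omega>. f (\<theta> \<omega>) - f \<omega>) \<omega> \<le> 2 * B" if "\<omega> \<in> space M" for \<omega>
      using B[OF that, unfolded abs_le_iff] B[OF funpow_in_space[OF that], unfolded abs_le_iff]
      unfolding birkhoff_sum_coboundary by (smt (verit))
    then have "superhedge (birkhoff_sum \<theta> n (\<lambda>\<omega>. f (\<theta> \<omega>) - f \<omega>)) (2 * B) []"
      by (rule superhedge_const)
    then have "hedge_price (2 * B) [] / real n \<in> averaged_prices (\<lambda>\<omega>. f (\<theta> \<omega>) - f \<omega>)"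
      unfolding averaged_prices_def using n by blast
    then show "0 + 2 * B / real n \<in> averaged_prices (\<lambda>\<omega>. f (\<theta> \<omega>) - f \<omega>)"
      by (simp add: hedge_price_def)
  qed
  then show ?thesis by (rule le_of_le_add_divide_nat)
qed

theorem ex_invariant_dominated_functional:
  obtains L where "dominated_functional M V L" "\<And>f. f \<in> BF \<Longrightarrow> L (\<lambda>\<omega>. f (\<theta> \<omega>)) = L f"
proof -
  interpret sublinear_functional BF upper_mean
    by unfold_locales (auto intro: bounded_functions_const bounded_functions_add
        bounded_functions_scale upper_mean_add upper_mean_scale)
  obtain L where L_add: "\<And>f g. f \<in> BF \<Longrightarrow> g \<in> BF \<Longrightarrow> L (\<lambda>x. f x + g x) = L f + L g"
    and L_scale: "\<And>f r. f \<in> BF \<Longrightarrow> L (\<lambda>x. r * f x) = r * L f"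
    and L_le: "\<And>f. f \<in> BF \<Longrightarrow> L f \<le> upper_mean f"
    using hahn_banach by blast
  have "dominated_functional M V L"
    using L_add L_scale order_trans[OF L_le upper_mean_le_bound]
      order_trans[OF L_le[OF bounded_functions_indicator] upper_mean_indicator_le]
    by unfold_locales blast+
  moreover have "L (\<lambda>\<omega>. f (\<theta> \<omega>)) = L f" if f: "f \<in> BF" for f
  proof -
    have "L (\<lambda>\<omega>. g (\<theta> \<omega>)) - L g \<le> 0" if g: "g \<in> BF" for g
      using L_add[OF compose_\<theta>_bounded[OF g] bounded_functions_scale[OF g, of "-1"]] L_scale[OF g, of "-1"]
        order_trans[OF L_le upper_mean_coboundary_nonpos[OF g]]
        bounded_functions_diff[OF compose_\<theta>_bounded[OF g] g] by simp
    from this[OF f] this[OF bounded_functions_scale[OF f, of "-1"]] show ?thesis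
      using L_scale[OF f, of "-1"] L_scale[OF compose_\<theta>_bounded[OF f], of "-1"] by simp
  qed
  ultimately show thesis using that by blast
qed

end

section \<open>The ergodic theorem\<close>

lemma LIMSEQ_average_of_linear_bounds:
  fixes s :: "nat \<Rightarrow> real"
  assumes upper: "\<And>q. q \<in> \<rat> \<Longrightarrow> c < q \<Longrightarrow> \<exists>C. \<forall>n. s n \<le> real n * q + C"
    and lower: "\<And>q. q \<in> \<rat> \<Longrightarrow> q < c \<Longrightarrow> \<exists>C. \<forall>n. real n * q - C \<le> s n"
  shows "(\<lambda>n. s n / real n) \<longlonglongrightarrow> c"
proof (rule LIMSEQ_I)
  fix r :: real assume r: "0 < r"
  obtain q1 where q1: "q1 \<in> \<rat>" "c < q1" "q1 < c + r / 2" using Rats_dense_in_real[of c "c + r / 2"] r by auto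
  obtain q2 where q2: "q2 \<in> \<rat>" "c - r / 2 < q2" "q2 < c" using Rats_dense_in_real[of "c - r / 2" c] r by auto
  obtain C1 where C1: "\<And>n. s n \<le> real n * q1 + C1" using upper[OF q1(1,2)] by blast
  obtain C2 where C2: "\<And>n. real n * q2 - C2 \<le> s n" using lower[OF q2(1,3)] by blast
  define K where "K = \<bar>C1\<bar> + \<bar>C2\<bar>"
  have K: "C1 \<le> K" "C2 \<le> K" unfolding K_def by linarith+
  obtain N :: nat where N: "2 * K / r < real N" using reals_Archimedean2 by blast
  have "\<bar>s n / real n - c\<bar> < r" if n: "N < n" for n
  proof -
    have pos: "0 < real n" using n by simp
    have "2 * K < r * real N" using N r by (simp add: field_simps)
    also have "\<dots> < r * real n" using n r by simp
    finally have "2 * K < real n * r" by (simp add: mult.commute)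
    moreover have "real n * q1 \<le> real n * c + real n * r / 2" "real n * c - real n * r / 2 \<le> real n * q2"
      using mult_left_mono[OF less_imp_le[OF q1(3)], of "real n"] mult_left_mono[OF less_imp_le[OF q2(2)], of "real n"]
      by (simp_all add: algebra_simps)
    ultimately have "\<bar>s n - real n * c\<bar> < real n * r"
      using C1[of n] C2[of n] K unfolding abs_less_iff by (intro conjI) linarith+
    moreover have "s n / real n - c = (s n - real n * c) / real n" using pos by (simp add: field_simps)
    ultimately show ?thesis using pos by (simp add: abs_divide pos_divide_less_eq mult.commute)
  qed
  then show "\<exists>no. \<forall>n\<ge>no. norm (s n / real n - c) < r" by (auto intro!: exI[of _ "Suc N"])
qed

locale invariant_functional = capacity_preserving_map M V \<theta> + dominated_functional M V L
  for M :: "'a measure" and V \<theta> L +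
  assumes L_shift: "f \<in> BF \<Longrightarrow> L (\<lambda>\<omega>. f (\<theta> \<omega>)) = L f"
begin

lemma birkhoff_max_bounded:
  assumes "f \<in> BF"
  shows "birkhoff_max \<theta> n f \<in> BF"
proof -
  obtain B where B: "\<And>\<omega>. \<omega> \<in> space M \<Longrightarrow> \<bar>f \<omega>\<bar> \<le> B" "0 \<le> B" using assms bounded_functionsE by blast
  show ?thesis
  proof (rule bounded_functionsI)
    fix \<omega> assume \<omega>: "\<omega> \<in> space M"
    obtain k where k: "k \<le> n" "birkhoff_max \<theta> n f \<omega> = birkhoff_sum \<theta> k f \<omega>"
      using birkhoff_max_attained[of n \<theta> f \<omega>] by blast
    have "\<bar>birkhoff_sum \<theta> k f \<omega>\<bar> \<le> real k * B" by (rule birkhoff_sum_abs_le[of f B, OF B(1) \<omega>])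
    moreover have "real k * B \<le> real n * B" using k(1) B(2) by (intro mult_right_mono) simp_all
    ultimately show "\<bar>birkhoff_max \<theta> n f \<omega>\<bar> \<le> real n * B" using k(2) by simp
  qed
qed

text \<open>Garsia's proof: by \<open>birkhoff_max_diff_le\<close>, this function dominates a coboundary, which \<open>L\<close>
  annihilates.\<close>

theorem maximal_ergodic_inequality:
  assumes f: "f \<in> BF"
  shows "0 \<le> L (\<lambda>\<omega>. f \<omega> * indicator {\<omega>\<in>space M. \<exists>k\<le>n. 0 < birkhoff_sum \<theta> k f \<omega>} \<omega>)"
proof -
  let ?F = "birkhoff_max \<theta> n f"
  have F: "?F \<in> BF" "(\<lambda>\<omega>. ?F (\<theta> \<omega>)) \<in> BF"
    using birkhoff_max_bounded[OF f] compose_\<theta>_bounded[OF birkhoff_max_bounded[OF f]] .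
  have "L (\<lambda>\<omega>. ?F \<omega> - ?F (\<theta> \<omega>))
      \<le> L (\<lambda>\<omega>. f \<omega> * indicator {\<omega>\<in>space M. \<exists>k\<le>n. 0 < birkhoff_sum \<theta> k f \<omega>} \<omega>)"
  proof (rule L_mono[OF bounded_functions_diff[OF F] bounded_functions_mult_indicator[OF f]])
    fix \<omega> assume "\<omega> \<in> space M"
    then have "indicator {\<omega>\<in>space M. \<exists>k\<le>n. 0 < birkhoff_sum \<theta> k f \<omega>} \<omega>
        = (indicator {x. \<exists>k\<le>n. 0 < birkhoff_sum \<theta> k f x} \<omega> :: real)"
      by (simp add: indicator_def)
    then show "?F \<omega> - ?F (\<theta> \<omega>)
        \<le> f \<omega> * indicator {\<omega>\<in>space M. \<exists>k\<le>n. 0 < birkhoff_sum \<theta> k f \<omega>} \<omega>"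
      using birkhoff_max_diff_le[of \<theta> n f \<omega>] by (simp only:)
  qed
  moreover have "L (\<lambda>\<omega>. ?F \<omega> - ?F (\<theta> \<omega>)) = 0" using L_diff[OF F] L_shift[OF F(1)] by simp
  ultimately show ?thesis by linarith
qed

lemma L_nonneg_if_birkhoff_sums_positive_qs:
  assumes "continuous_capacity M V" and f: "f \<in> borel_measurable M" "f \<in> BF"
    and D: "D \<in> sets M" "V (space M - D) = 0" "\<And>\<omega>. \<omega> \<in> D \<Longrightarrow> \<exists>n. 0 < birkhoff_sum \<theta> n f \<omega>"
  shows "0 \<le> L f"
proof -
  obtain K where K: "\<And>\<omega>. \<omega> \<in> space M \<Longrightarrow> \<bar>f \<omega>\<bar> \<le> K" "0 \<le> K" using f(2) bounded_functionsE by blast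
  define E where "E n = {\<omega>\<in>space M. \<exists>k\<le>n. 0 < birkhoff_sum \<theta> k f \<omega>}" for n
  have E: "E n \<in> sets M" for n
  proof -
    have "E n = (\<Union>k\<le>n. {\<omega>\<in>space M. 0 < birkhoff_sum \<theta> k f \<omega>})" unfolding E_def by blast
    then show ?thesis using birkhoff_sum_measurable[OF f(1)] by auto
  qed
  have lower: "- K * V (space M - E n) \<le> L f" for n
    using L_ge_restriction[of f K "E n", OF f(2) K(1) K(2) E] maximal_ergodic_inequality[OF f(2), of n] unfolding E_def by linarith
  have "decseq (\<lambda>n. space M - E n)" by (rule decseq_SucI) (force simp: E_def)
  then have "(\<lambda>n. V (space M - E n)) \<longlonglongrightarrow> V (\<Inter>n. space M - E n)"
    using E by (intro continuous_capacity_decseqD[OF assms(1)]) auto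
  moreover have "V (\<Inter>n. space M - E n) = 0"
  proof -
    have "\<omega> \<notin> D" if "\<omega> \<in> (\<Inter>n. space M - E n)" for \<omega>
    proof
      assume "\<omega> \<in> D"
      then obtain n where "0 < birkhoff_sum \<theta> n f \<omega>" using D(3) by blast
      then have "\<omega> \<in> E n" using that unfolding E_def by blast
      then show False using that by blast
    qed
    then have "(\<Inter>n. space M - E n) \<subseteq> space M - D" by blast
    then have "V (\<Inter>n. space M - E n) \<le> V (space M - D)" using E D(1) by (intro V_mono) auto
    moreover have "0 \<le> V (\<Inter>n. space M - E n)" using E by (intro V_nonneg) auto
    ultimately show ?thesis using D(2) by simp
  qed
  ultimately have "(\<lambda>n. V (space M - E n)) \<longlonglongrightarrow> 0" by simp
  then have "(\<lambda>n. - K * V (space M - E n)) \<longlonglongrightarrow> 0"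
    using tendsto_mult_left[of _ 0 sequentially "- K"] by simp
  then show ?thesis using lower by (intro LIMSEQ_le_const2[of _ 0]) auto
qed


definition divergence_set :: "('a \<Rightarrow> real) \<Rightarrow> 'a set" where
  "divergence_set g = {\<omega>\<in>space M. \<forall>C. \<exists>n. C < birkhoff_sum \<theta> n g \<omega>}"

lemma divergence_set_sets:
  assumes "g \<in> borel_measurable M"
  shows "divergence_set g \<in> sets M"
proof -
  have "divergence_set g = (\<Inter>C::nat. \<Union>n. {\<omega>\<in>space M. real C < birkhoff_sum \<theta> n g \<omega>})"
  proof (intro equalityI subsetI)
    fix \<omega> assume "\<omega> \<in> (\<Inter>C::nat. \<Union>n. {\<omega>\<in>space M. real C < birkhoff_sum \<theta> n g \<omega>})"
    moreover have "\<exists>C'::nat. C < real C'" for C :: real by (rule reals_Archimedean2)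
    ultimately show "\<omega> \<in> divergence_set g" unfolding divergence_set_def by (fastforce intro: less_trans)
  qed (auto simp: divergence_set_def)
  also have "\<dots> \<in> sets M" using birkhoff_sum_measurable[OF assms] by measurable
  finally show ?thesis .
qed

text \<open>Since \<open>g\<close> is bounded, \<open>S\<^sub>n\<^sub>+\<^sub>1 g = g + S\<^sub>n g \<circ> \<theta>\<close> shows that \<open>\<omega>\<close> and \<open>\<theta> \<omega>\<close> have
  unbounded Birkhoff sums simultaneously.\<close>

lemma divergence_set_invariant:
  assumes "g \<in> BF"
  shows "\<theta> -` divergence_set g \<inter> space M = divergence_set g"
proof -
  obtain B where B: "\<And>\<omega>. \<omega> \<in> space M \<Longrightarrow> \<bar>g \<omega>\<bar> \<le> B" using assms bounded_functionsE by blast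
  have "(\<forall>C. \<exists>n. C < birkhoff_sum \<theta> n g (\<theta> \<omega>)) \<longleftrightarrow> (\<forall>C. \<exists>n. C < birkhoff_sum \<theta> n g \<omega>)"
    if \<omega>: "\<omega> \<in> space M" for \<omega>
  proof (intro iffI allI)
    fix C assume "\<forall>C. \<exists>n. C < birkhoff_sum \<theta> n g (\<theta> \<omega>)"
    then obtain n where "C + B < birkhoff_sum \<theta> n g (\<theta> \<omega>)" by blast
    then have "C < birkhoff_sum \<theta> (Suc n) g \<omega>" using B[OF \<omega>] by (simp add: birkhoff_sum_Suc abs_le_iff)
    then show "\<exists>n. C < birkhoff_sum \<theta> n g \<omega>" ..
  next
    fix C assume "\<forall>C. \<exists>n. C < birkhoff_sum \<theta> n g \<omega>"
    then obtain n where n: "max (C + B) 0 < birkhoff_sum \<theta> n g \<omega>" by blast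
    then obtain j where "n = Suc j" by (cases n) auto
    then have "C < birkhoff_sum \<theta> j g (\<theta> \<omega>)" using n B[OF \<omega>] by (simp add: birkhoff_sum_Suc abs_le_iff)
    then show "\<exists>n. C < birkhoff_sum \<theta> n g (\<theta> \<omega>)" ..
  qed
  then show ?thesis
    using measurable_space[OF \<theta>_measurable] unfolding divergence_set_def by auto
qed

lemma birkhoff_sum_bounded_above:
  "\<omega> \<in> space M \<Longrightarrow> \<omega> \<notin> divergence_set g \<Longrightarrow> \<exists>C. \<forall>n. birkhoff_sum \<theta> n g \<omega> \<le> C"
  unfolding divergence_set_def by (auto simp: not_less)

lemma V_divergence_set_eq_0:
  assumes "continuous_capacity M V" "ergodic_capacity M V \<theta>"
    and g: "g \<in> borel_measurable M" "g \<in> BF" and "L g < 0"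
  shows "V (divergence_set g) = 0"
proof (rule ccontr)
  assume "V (divergence_set g) \<noteq> 0"
  then have "V (space M - divergence_set g) = 0"
    using assms(2) divergence_set_sets[OF g(1)] divergence_set_invariant[OF g(2)]
    unfolding ergodic_capacity_def by blast
  moreover have "\<exists>n. 0 < birkhoff_sum \<theta> n g \<omega>" if "\<omega> \<in> divergence_set g" for \<omega>
    using that unfolding divergence_set_def by blast
  ultimately have "0 \<le> L g"
    using L_nonneg_if_birkhoff_sums_positive_qs[OF assms(1) g divergence_set_sets[OF g(1)]] by blast
  then show False using \<open>L g < 0\<close> by simp
qed

lemma V_divergence_set_translate_eq_0:
  assumes "continuous_capacity M V" "ergodic_capacity M V \<theta>"
    and \<xi>: "\<xi> \<in> borel_measurable M" "\<xi> \<in> BF"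
  shows "L \<xi> < q \<Longrightarrow> V (divergence_set (\<lambda>\<omega>. \<xi> \<omega> - q)) = 0"
    and "q < L \<xi> \<Longrightarrow> V (divergence_set (\<lambda>\<omega>. q - \<xi> \<omega>)) = 0"
proof -
  have "(\<lambda>\<omega>. \<xi> \<omega> - q) \<in> borel_measurable M" "(\<lambda>\<omega>. q - \<xi> \<omega>) \<in> borel_measurable M"
    using \<xi>(1) by simp_all
  moreover have "(\<lambda>\<omega>. \<xi> \<omega> - q) \<in> BF" "(\<lambda>\<omega>. q - \<xi> \<omega>) \<in> BF"
    using bounded_functions_diff[OF \<xi>(2) bounded_functions_const]
      bounded_functions_diff[OF bounded_functions_const \<xi>(2)] by simp_all
  ultimately show "L \<xi> < q \<Longrightarrow> V (divergence_set (\<lambda>\<omega>. \<xi> \<omega> - q)) = 0"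
    and "q < L \<xi> \<Longrightarrow> V (divergence_set (\<lambda>\<omega>. q - \<xi> \<omega>)) = 0"
    using L_diff[OF \<xi>(2) bounded_functions_const, of q] L_diff[OF bounded_functions_const \<xi>(2), of q]
    by (auto intro!: V_divergence_set_eq_0[OF assms(1,2)])
qed

text \<open>The exceptional set collects, for rational \<open>q\<close> on either side of \<open>L \<xi>\<close>, the points where
  the Birkhoff sums of \<open>\<xi> - q\<close> resp. \<open>q - \<xi>\<close> are unbounded above; each of them is null
  because \<open>L\<close> is negative on the corresponding function.\<close>

theorem birkhoff_average_tendsto_qs:
  assumes "continuous_capacity M V" "ergodic_capacity M V \<theta>"
    and \<xi>: "\<xi> \<in> borel_measurable M" "\<xi> \<in> BF"
  obtains N where "N \<in> sets M" "V N = 0"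
    "\<And>\<omega>. \<omega> \<in> space M - N \<Longrightarrow> (\<lambda>n. birkhoff_sum \<theta> n \<xi> \<omega> / real n) \<longlonglongrightarrow> L \<xi>"
proof -
  define up where "up q = divergence_set (\<lambda>\<omega>. \<xi> \<omega> - q)" for q
  define down where "down q = divergence_set (\<lambda>\<omega>. q - \<xi> \<omega>)" for q
  define N where "N = (\<Union>q\<in>\<rat> \<inter> {L \<xi><..}. up q) \<union> (\<Union>q\<in>\<rat> \<inter> {..<L \<xi>}. down q)"
  have up: "up q \<in> sets M" "L \<xi> < q \<Longrightarrow> V (up q) = 0" for q
    unfolding up_def using \<xi>(1) V_divergence_set_translate_eq_0(1)[OF assms] by (auto intro: divergence_set_sets)
  have down: "down q \<in> sets M" "q < L \<xi> \<Longrightarrow> V (down q) = 0" for q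
    unfolding down_def using \<xi>(1) V_divergence_set_translate_eq_0(2)[OF assms] by (auto intro: divergence_set_sets)
  have countable: "countable (\<rat> \<inter> A)" for A by (rule countable_Int1[OF countable_rat])
  have up_sets: "(\<Union>q\<in>\<rat> \<inter> {L \<xi><..}. up q) \<in> sets M" by (rule sets.countable_UN''[OF countable up(1)])
  have down_sets: "(\<Union>q\<in>\<rat> \<inter> {..<L \<xi>}. down q) \<in> sets M" by (rule sets.countable_UN''[OF countable down(1)])
  show thesis
  proof
    show "N \<in> sets M" unfolding N_def by (rule sets.Un[OF up_sets down_sets])
    have "V (\<Union>q\<in>\<rat> \<inter> {L \<xi><..}. up q) = 0"
      by (rule V_null_UN[OF assms(1) countable]) (simp_all add: up)
    moreover have "V (\<Union>q\<in>\<rat> \<inter> {..<L \<xi>}. down q) = 0"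
      by (rule V_null_UN[OF assms(1) countable]) (simp_all add: down)
    ultimately show "V N = 0" unfolding N_def by (rule V_null_Un[OF up_sets down_sets])
  next
    fix \<omega> assume \<omega>: "\<omega> \<in> space M - N"
    show "(\<lambda>n. birkhoff_sum \<theta> n \<xi> \<omega> / real n) \<longlonglongrightarrow> L \<xi>"
    proof (rule LIMSEQ_average_of_linear_bounds)
      fix q assume "q \<in> \<rat>" "L \<xi> < q"
      then have "\<omega> \<notin> up q" using \<omega> unfolding N_def by blast
      then obtain C where "\<forall>n. birkhoff_sum \<theta> n (\<lambda>\<omega>. \<xi> \<omega> - q) \<omega> \<le> C"
        using birkhoff_sum_bounded_above \<omega> unfolding up_def by blast
      then show "\<exists>C. \<forall>n. birkhoff_sum \<theta> n \<xi> \<omega> \<le> real n * q + C"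
        by (auto simp: birkhoff_sum_diff_const algebra_simps)
    next
      fix q assume "q \<in> \<rat>" "q < L \<xi>"
      then have "\<omega> \<notin> down q" using \<omega> unfolding N_def by blast
      then obtain C where "\<forall>n. birkhoff_sum \<theta> n (\<lambda>\<omega>. q - \<xi> \<omega>) \<omega> \<le> C"
        using birkhoff_sum_bounded_above \<omega> unfolding down_def by blast
      then show "\<exists>C. \<forall>n. real n * q - C \<le> birkhoff_sum \<theta> n \<xi> \<omega>"
        by (auto simp: birkhoff_sum_diff_const algebra_simps)
    qed
  qed
qed

end

theorem theorem7:
  fixes M :: "'a measure" and V :: "'a set \<Rightarrow> real"
    and \<theta> :: "'a \<Rightarrow> 'a" and \<xi> :: "'a \<Rightarrow> real"
  assumes "capacity M V"
    and "continuous_capacity M V"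
    and "concave_capacity M V"
    and "\<theta> \<in> M \<rightarrow>\<^sub>M M"
    and "preserves_capacity M V \<theta>"
    and "ergodic_capacity M V \<theta>"
    and "\<xi> \<in> borel_measurable M"
    and "\<exists>K. \<forall>\<omega>\<in>space M. \<bar>\<xi> \<omega>\<bar> \<le> K"
  shows "\<exists>c. (\<exists>N\<in>sets M. V N = 0 \<and>
              (\<forall>\<omega>\<in>space M - N.
                 (\<lambda>n. (\<Sum>k<n. \<xi> ((\<theta> ^^ k) \<omega>)) / real n) \<longlonglongrightarrow> c))
          \<and> choquet_integral M (conjugate_capacity M V) \<xi> \<le> c
          \<and> c \<le> choquet_integral M V \<xi>"
proof -
  interpret capacity_preserving_map M V \<theta>
    using assms(1,3-5) by unfold_locales
  obtain L where "dominated_functional M V L" and shift: "\<And>f. f \<in> BF \<Longrightarrow> L (\<lambda>\<omega>. f (\<theta> \<omega>)) = L f"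
    using ex_invariant_dominated_functional by blast
  then interpret invariant_functional M V \<theta> L
    by (intro invariant_functional.intro capacity_preserving_map_axioms invariant_functional_axioms.intro)
  obtain K where K: "\<And>\<omega>. \<omega> \<in> space M \<Longrightarrow> \<bar>\<xi> \<omega>\<bar> \<le> K" using assms(8) by blast
  then have "\<xi> \<in> BF" by (rule bounded_functionsI)
  then obtain N where "N \<in> sets M" "V N = 0"
    "\<And>\<omega>. \<omega> \<in> space M - N \<Longrightarrow> (\<lambda>n. birkhoff_sum \<theta> n \<xi> \<omega> / real n) \<longlonglongrightarrow> L \<xi>"
    using birkhoff_average_tendsto_qs[OF assms(2,6,7)] by blast
  moreover have "choquet_integral M (conjugate_capacity M V) \<xi> \<le> L \<xi>" "L \<xi> \<le> choquet_integral M V \<xi>"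
    using choquet_integral_conjugate_le_L[OF assms(7) K] L_le_choquet_integral[OF assms(7) K] by auto
  ultimately show ?thesis unfolding birkhoff_sum_def by blast
qed

end
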